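(* Let $A=\mathbb{C}Q/I$ be a toupie algebra and let $Q_a$ be the $a$-Kronecker quiver (two vertices, a source and a sink, and $a$ arrows from the source to the sink). The Lie subalgebra of $\mathrm{HH}^1(A)$ generated by $\{x_j, w_{pq}: p\ne q,\ 1\le p,q\le a,\ 2\le j\le a\}$ is isomorphic to $\mathrm{HH}^1(\mathbb{C}Q_a)$.
   Context: A finite quiver $Q$ is a toupie quiver if it has a unique source $0$, a unique sink $\omega$, and every other vertex is the source of exactly one arrow and the target of exactly one arrow. A branch is a path from $0$ to $\omega$. A toupie algebra is $A=\mathbb{C}Q/I$ with $Q$ toupie and $I$ an admissible ideal generated by monomial relations (paths inside one branch) and non-monomial relations (linear combinations of branches). $\alpha^{(1)},\dots,\alpha^{(a)}$ are the arrows from $0$ to $\omega$. $E=\mathbb{C}Q_0$. For an arrow $\gamma$ and $h\in e_{s(\gamma)}Ae_{t(\gamma)}$, $\gamma\|h$ is the derivation of $A$ vanishing on $E$ sending $\gamma$ to $h$ and other arrows to $0$; $\mathrm{HH}^1(A)$ (derivations vanishing on $E$ modulo inner ones) is a Lie algebra under the Gerstenhaber bracket. $w_{pq}$ is the class of $\alpha^{(p)}\|\alpha^{(q)}$ for $p\neq q$, and $x_j$ the class of $\alpha^{(j)}\|\alpha^{(j)}-\alpha^{(1)}\|\alpha^{(1)}$. *)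

theory Defs
  imports Complex_Main
begin

record ('v, 'e) quiver =
  verts :: "'v set"
  arrs  :: "'e set"
  src   :: "'e \<Rightarrow> 'v"
  tgt   :: "'e \<Rightarrow> 'v"

text \<open>A path is a pair (start vertex, list of arrows), composed left to right:
  the path a1 a2 ... an satisfies tgt ai = src a(i+1). The trivial path at v is (v, []).\<close>

type_synonym ('v, 'e) path = "'v \<times> 'e list"

definition qpath :: "('v, 'e) quiver \<Rightarrow> ('v, 'e) path \<Rightarrow> bool" where
  "qpath Q p \<longleftrightarrow> fst p \<in> verts Q \<and> set (snd p) \<subseteq> arrs Q
     \<and> (snd p \<noteq> [] \<longrightarrow> src Q (hd (snd p)) = fst p)
     \<and> (\<forall>i. Suc i < length (snd p) \<longrightarrow> tgt Q (snd p ! i) = src Q (snd p ! Suc i))"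

definition pend :: "('v, 'e) quiver \<Rightarrow> ('v, 'e) path \<Rightarrow> 'v" where
  "pend Q p = (if snd p = [] then fst p else tgt Q (last (snd p)))"

text \<open>Elements of the path algebra CQ: finitely supported complex functions on paths.\<close>

type_synonym ('v, 'e) pelem = "('v, 'e) path \<Rightarrow> complex"

definition cq :: "('v, 'e) quiver \<Rightarrow> ('v, 'e) pelem set" where
  "cq Q = {f. finite {p. f p \<noteq> 0} \<and> (\<forall>p. f p \<noteq> 0 \<longrightarrow> qpath Q p)}"

definition padd :: "('v, 'e) pelem \<Rightarrow> ('v, 'e) pelem \<Rightarrow> ('v, 'e) pelem" where
  "padd f g = (\<lambda>p. f p + g p)"

definition psub :: "('v, 'e) pelem \<Rightarrow> ('v, 'e) pelem \<Rightarrow> ('v, 'e) pelem" where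
  "psub f g = (\<lambda>p. f p - g p)"

definition psmult :: "complex \<Rightarrow> ('v, 'e) pelem \<Rightarrow> ('v, 'e) pelem" where
  "psmult c f = (\<lambda>p. c * f p)"

definition pzero :: "('v, 'e) pelem" where
  "pzero = (\<lambda>p. 0)"

definition pmult :: "('v, 'e) quiver \<Rightarrow> ('v, 'e) pelem \<Rightarrow> ('v, 'e) pelem \<Rightarrow> ('v, 'e) pelem" where
  "pmult Q f g = (\<lambda>p. if qpath Q p then
       (\<Sum>k\<in>{0..length (snd p)}. f (fst p, take k (snd p)) * g (pend Q (fst p, take k (snd p)), drop k (snd p)))
     else 0)"

definition pvec :: "('v, 'e) path \<Rightarrow> ('v, 'e) pelem" where
  "pvec q = (\<lambda>p. if p = q then 1 else 0)"

definition idem :: "'v \<Rightarrow> ('v, 'e) pelem" where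
  "idem v = pvec (v, [])"

definition arr :: "('v, 'e) quiver \<Rightarrow> 'e \<Rightarrow> ('v, 'e) pelem" where
  "arr Q g = pvec (src Q g, [g])"

definition Rk :: "('v, 'e) quiver \<Rightarrow> nat \<Rightarrow> ('v, 'e) pelem set" where
  "Rk Q k = {f \<in> cq Q. \<forall>p. f p \<noteq> 0 \<longrightarrow> k \<le> length (snd p)}"

inductive_set ideal_gen :: "('v, 'e) quiver \<Rightarrow> ('v, 'e) pelem set \<Rightarrow> ('v, 'e) pelem set"
  for Q R where
  zero: "pzero \<in> ideal_gen Q R"
| gen: "r \<in> R \<Longrightarrow> f \<in> cq Q \<Longrightarrow> g \<in> cq Q \<Longrightarrow> pmult Q f (pmult Q r g) \<in> ideal_gen Q R"
| add: "x \<in> ideal_gen Q R \<Longrightarrow> y \<in> ideal_gen Q R \<Longrightarrow> padd x y \<in> ideal_gen Q R"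
| smult: "x \<in> ideal_gen Q R \<Longrightarrow> psmult c x \<in> ideal_gen Q R"

definition admissible :: "('v, 'e) quiver \<Rightarrow> ('v, 'e) pelem set \<Rightarrow> bool" where
  "admissible Q I \<longleftrightarrow> (\<exists>m\<ge>2. Rk Q m \<subseteq> I) \<and> I \<subseteq> Rk Q 2"

definition is_toupie :: "('v, 'e) quiver \<Rightarrow> 'v \<Rightarrow> 'v \<Rightarrow> bool" where
  "is_toupie Q z0 om \<longleftrightarrow> finite (verts Q) \<and> finite (arrs Q)
     \<and> (\<forall>g\<in>arrs Q. src Q g \<in> verts Q \<and> tgt Q g \<in> verts Q)
     \<and> z0 \<in> verts Q \<and> om \<in> verts Q
     \<and> (\<forall>v\<in>verts Q. (\<not> (\<exists>g\<in>arrs Q. tgt Q g = v)) \<longleftrightarrow> v = z0)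
     \<and> (\<forall>v\<in>verts Q. (\<not> (\<exists>g\<in>arrs Q. src Q g = v)) \<longleftrightarrow> v = om)
     \<and> (\<forall>v\<in>verts Q - {z0, om}. card {g\<in>arrs Q. src Q g = v} = 1 \<and> card {g\<in>arrs Q. tgt Q g = v} = 1)"

definition is_branch :: "('v, 'e) quiver \<Rightarrow> 'v \<Rightarrow> 'v \<Rightarrow> ('v, 'e) path \<Rightarrow> bool" where
  "is_branch Q z0 om b \<longleftrightarrow> qpath Q b \<and> fst b = z0 \<and> pend Q b = om"

definition monomial_rel :: "('v, 'e) quiver \<Rightarrow> 'v \<Rightarrow> 'v \<Rightarrow> ('v, 'e) pelem \<Rightarrow> bool" where
  "monomial_rel Q z0 om r \<longleftrightarrow> (\<exists>p b xs ys. r = pvec p \<and> qpath Q p \<and> is_branch Q z0 om b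
      \<and> snd b = xs @ snd p @ ys)"

definition nonmonomial_rel :: "('v, 'e) quiver \<Rightarrow> 'v \<Rightarrow> 'v \<Rightarrow> ('v, 'e) pelem \<Rightarrow> bool" where
  "nonmonomial_rel Q z0 om r \<longleftrightarrow> r \<in> cq Q \<and> (\<forall>p. r p \<noteq> 0 \<longrightarrow> is_branch Q z0 om p)"

definition is_toupie_algebra :: "('v, 'e) quiver \<Rightarrow> 'v \<Rightarrow> 'v \<Rightarrow> ('v, 'e) pelem set \<Rightarrow> bool" where
  "is_toupie_algebra Q z0 om I \<longleftrightarrow> is_toupie Q z0 om
     \<and> (\<exists>R. (\<forall>r\<in>R. monomial_rel Q z0 om r \<or> nonmonomial_rel Q z0 om r)
            \<and> I = ideal_gen Q R) \<and> admissible Q I"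

text \<open>A derivation of A = CQ/I is represented by a map D on representatives in CQ which is
  well defined, C-linear and Leibniz modulo I; it vanishes on E if D(e_v) is in I.\<close>

type_synonym ('v, 'e) dmap = "('v, 'e) pelem \<Rightarrow> ('v, 'e) pelem"

definition is_der :: "('v, 'e) quiver \<Rightarrow> ('v, 'e) pelem set \<Rightarrow> ('v, 'e) dmap \<Rightarrow> bool" where
  "is_der Q I D \<longleftrightarrow>
     (\<forall>f\<in>cq Q. D f \<in> cq Q)
   \<and> (\<forall>f\<in>cq Q. \<forall>g\<in>cq Q. psub f g \<in> I \<longrightarrow> psub (D f) (D g) \<in> I)
   \<and> (\<forall>f\<in>cq Q. \<forall>g\<in>cq Q. \<forall>c. psub (D (padd (psmult c f) g)) (padd (psmult c (D f)) (D g)) \<in> I)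
   \<and> (\<forall>f\<in>cq Q. \<forall>g\<in>cq Q. psub (D (pmult Q f g)) (padd (pmult Q (D f) g) (pmult Q f (D g))) \<in> I)
   \<and> (\<forall>v\<in>verts Q. D (idem v) \<in> I)"

definition pcomm :: "('v, 'e) quiver \<Rightarrow> ('v, 'e) pelem \<Rightarrow> ('v, 'e) pelem \<Rightarrow> ('v, 'e) pelem" where
  "pcomm Q x f = psub (pmult Q x f) (pmult Q f x)"

definition is_inner :: "('v, 'e) quiver \<Rightarrow> ('v, 'e) pelem set \<Rightarrow> ('v, 'e) dmap \<Rightarrow> bool" where
  "is_inner Q I D \<longleftrightarrow> (\<exists>x\<in>cq Q. (\<forall>v\<in>verts Q. pcomm Q x (idem v) \<in> I)
       \<and> (\<forall>f\<in>cq Q. psub (D f) (pcomm Q x f) \<in> I))"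

definition dadd :: "('v, 'e) dmap \<Rightarrow> ('v, 'e) dmap \<Rightarrow> ('v, 'e) dmap" where
  "dadd D1 D2 = (\<lambda>f. padd (D1 f) (D2 f))"

definition dsub :: "('v, 'e) dmap \<Rightarrow> ('v, 'e) dmap \<Rightarrow> ('v, 'e) dmap" where
  "dsub D1 D2 = (\<lambda>f. psub (D1 f) (D2 f))"

definition dsmult :: "complex \<Rightarrow> ('v, 'e) dmap \<Rightarrow> ('v, 'e) dmap" where
  "dsmult c D = (\<lambda>f. psmult c (D f))"

text \<open>Gerstenhaber bracket on HH^1: the commutator of derivations.\<close>
definition dbr :: "('v, 'e) dmap \<Rightarrow> ('v, 'e) dmap \<Rightarrow> ('v, 'e) dmap" where
  "dbr D1 D2 = (\<lambda>f. psub (D1 (D2 f)) (D2 (D1 f)))"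

text \<open>Equality of classes in HH^1(A).\<close>
definition der_eq :: "('v, 'e) quiver \<Rightarrow> ('v, 'e) pelem set \<Rightarrow> ('v, 'e) dmap \<Rightarrow> ('v, 'e) dmap \<Rightarrow> bool" where
  "der_eq Q I D1 D2 \<longleftrightarrow> is_inner Q I (dsub D1 D2)"

text \<open>Representatives of the Lie subalgebra of HH^1(A) generated by (the classes of) G:
  all inner derivations, G, closed under linear combinations and brackets.\<close>
inductive_set lie_gen :: "('v, 'e) quiver \<Rightarrow> ('v, 'e) pelem set \<Rightarrow> ('v, 'e) dmap set \<Rightarrow> ('v, 'e) dmap set"
  for Q I G where
  gen: "D \<in> G \<Longrightarrow> D \<in> lie_gen Q I G"
| inner: "is_der Q I D \<Longrightarrow> is_inner Q I D \<Longrightarrow> D \<in> lie_gen Q I G"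
| add: "D1 \<in> lie_gen Q I G \<Longrightarrow> D2 \<in> lie_gen Q I G \<Longrightarrow> dadd D1 D2 \<in> lie_gen Q I G"
| smult: "D \<in> lie_gen Q I G \<Longrightarrow> dsmult c D \<in> lie_gen Q I G"
| br: "D1 \<in> lie_gen Q I G \<Longrightarrow> D2 \<in> lie_gen Q I G \<Longrightarrow> dbr D1 D2 \<in> lie_gen Q I G"

text \<open>Lie algebra isomorphism between (S modulo inner derivations of A1) and HH^1(A2),
  expressed on representatives.\<close>
definition lie_iso_HH1 :: "('v, 'e) quiver \<Rightarrow> ('v, 'e) pelem set \<Rightarrow> ('v, 'e) dmap set
     \<Rightarrow> ('w, 'f) quiver \<Rightarrow> ('w, 'f) pelem set \<Rightarrow> bool" where
  "lie_iso_HH1 Q1 I1 S Q2 I2 \<longleftrightarrow> (\<exists>\<phi>.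
      (\<forall>D\<in>S. is_der Q2 I2 (\<phi> D))
    \<and> (\<forall>D1\<in>S. \<forall>D2\<in>S. der_eq Q1 I1 D1 D2 \<longleftrightarrow> der_eq Q2 I2 (\<phi> D1) (\<phi> D2))
    \<and> (\<forall>E. is_der Q2 I2 E \<longrightarrow> (\<exists>D\<in>S. der_eq Q2 I2 (\<phi> D) E))
    \<and> (\<forall>D1\<in>S. \<forall>D2\<in>S. \<forall>c. der_eq Q2 I2 (\<phi> (dadd (dsmult c D1) D2)) (dadd (dsmult c (\<phi> D1)) (\<phi> D2)))
    \<and> (\<forall>D1\<in>S. \<forall>D2\<in>S. der_eq Q2 I2 (\<phi> (dbr D1 D2)) (dbr (\<phi> D1) (\<phi> D2))))"

text \<open>The derivation of CQ vanishing on E with prescribed values delta on the arrows: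
  a1...an maps to the sum over i of a1...a(i-1) delta(ai) a(i+1)...an.\<close>
definition free_der :: "('v, 'e) quiver \<Rightarrow> ('e \<Rightarrow> ('v, 'e) pelem) \<Rightarrow> ('v, 'e) dmap" where
  "free_der Q \<delta> f = (\<lambda>p. \<Sum>q\<in>{q. f q \<noteq> 0}. f q *
      (\<Sum>i<length (snd q). pmult Q (pmult Q (pvec (fst q, take i (snd q))) (\<delta> (snd q ! i)))
                              (pvec (tgt Q (snd q ! i), drop (Suc i) (snd q))) p))"

definition arrder :: "('v, 'e) quiver \<Rightarrow> 'e \<Rightarrow> ('v, 'e) pelem \<Rightarrow> ('v, 'e) dmap" where
  "arrder Q g h = free_der Q (\<lambda>b. if b = g then h else pzero)"

definition w_der :: "('v, 'e) quiver \<Rightarrow> (nat \<Rightarrow> 'e) \<Rightarrow> nat \<Rightarrow> nat \<Rightarrow> ('v, 'e) dmap" where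
  "w_der Q \<alpha> p q = arrder Q (\<alpha> p) (arr Q (\<alpha> q))"

definition x_der :: "('v, 'e) quiver \<Rightarrow> (nat \<Rightarrow> 'e) \<Rightarrow> nat \<Rightarrow> ('v, 'e) dmap" where
  "x_der Q \<alpha> j = dsub (arrder Q (\<alpha> j) (arr Q (\<alpha> j))) (arrder Q (\<alpha> 1) (arr Q (\<alpha> 1)))"

definition kronecker :: "nat \<Rightarrow> (nat, nat) quiver" where
  "kronecker a = \<lparr>verts = {0, 1}, arrs = {1..a}, src = (\<lambda>_. 0), tgt = (\<lambda>_. 1)\<rparr>"

end

(*
  Modulo inner derivations, every element of the Lie algebra generated by the w_pq and x_j
  acts only on the arrows alpha_1, ..., alpha_a from the source to the sink, by a traceless
  a x a matrix: this property is preserved by sums, scalar multiples and brackets (the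
  bracket of derivations becomes the commutator of matrices), and holds for the generators,
  whose matrices E_pq (p ~= q) and E_jj - E_11 span all traceless matrices. Two such
  derivations are equivalent exactly when their matrices differ by a scalar matrix, and the
  trace condition makes the matrix unique. On the Kronecker quiver every derivation vanishing
  on E is given by an arbitrary a x a matrix acting on the arrows, and the scalar matrices are
  the inner derivations [c e_0, -]. Sending a derivation of A to the derivation of the
  Kronecker algebra with the same arrow matrix is therefore an isomorphism of Lie algebras.
*)
theory Submission
  imports Defs
begin

section \<open>Paths and the path algebra\<close>

definition wf_quiver :: "('v, 'e) quiver \<Rightarrow> bool" where
  "wf_quiver Q \<longleftrightarrow> (\<forall>g\<in>arrs Q. src Q g \<in> verts Q \<and> tgt Q g \<in> verts Q)"

lemma pend_pend: "pend Q (pend Q (v, ys), zs) = pend Q (v, ys @ zs)"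
  by (cases "zs = []") (auto simp: pend_def)

lemma qpath_take: "qpath Q (v, xs) \<Longrightarrow> qpath Q (v, take k xs)"
  unfolding qpath_def by (auto dest: in_set_takeD)

lemma qpath_drop:
  assumes w: "wf_quiver Q" and q: "qpath Q (v, xs)" and k: "k \<le> length xs"
  shows "qpath Q (pend Q (v, take k xs), drop k xs)"
proof -
  have qa: "set xs \<subseteq> arrs Q" using q by (simp add: qpath_def)
  have pe: "pend Q (v, take k xs) \<in> verts Q"
  proof (cases "take k xs = []")
    case True then show ?thesis using q by (simp add: pend_def qpath_def)
  next
    case False
    then have "last (take k xs) \<in> arrs Q" using qa by (meson last_in_set in_set_takeD subsetD)
    then show ?thesis using w False by (simp add: pend_def wf_quiver_def)
  qed
  have hd: "src Q (hd (drop k xs)) = pend Q (v, take k xs)" if ne: "drop k xs \<noteq> []"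
  proof (cases k)
    case 0 then show ?thesis using q ne by (simp add: pend_def qpath_def)
  next
    case (Suc j)
    have kl: "k < length xs" using ne by simp
    then have "tgt Q (xs ! j) = src Q (xs ! Suc j)" using q Suc by (simp add: qpath_def)
    moreover have "last (take k xs) = xs ! j" using kl Suc by (simp add: take_Suc_conv_app_nth)
    moreover have "take k xs \<noteq> []" using Suc kl by (cases xs) auto
    ultimately show ?thesis using Suc kl by (simp add: pend_def hd_drop_conv_nth)
  qed
  have "tgt Q (drop k xs ! i) = src Q (drop k xs ! Suc i)" if "Suc i < length (drop k xs)" for i
    using q that k by (simp add: qpath_def nth_drop)
  moreover have "set (drop k xs) \<subseteq> arrs Q" using qa set_drop_subset by fastforce
  ultimately show ?thesis using pe hd unfolding qpath_def by simp
qed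

lemma pmult_apply:
  "pmult Q f g (v, xs) = (if qpath Q (v, xs) then
     (\<Sum>k\<in>{0..length xs}. f (v, take k xs) * g (pend Q (v, take k xs), drop k xs)) else 0)"
  by (simp add: pmult_def)

lemma sum_triangle_swap:
  "(\<Sum>j\<in>{0..n::nat}. \<Sum>i\<in>{0..j}. F i j) = (\<Sum>i\<in>{0..n}. \<Sum>j\<in>{i..n}. F i j)"
proof (induction n)
  case 0 then show ?case by simp
next
  case (Suc n)
  have "(\<Sum>i\<in>{0..n}. \<Sum>j\<in>{i..Suc n}. F i j) = (\<Sum>i\<in>{0..n}. (\<Sum>j\<in>{i..n}. F i j) + F i (Suc n))"
    by (rule sum.cong) (auto simp: sum.cl_ivl_Suc)
  then show ?case using Suc by (simp add: sum.atLeast0_atMost_Suc sum.distrib)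
qed

lemma pmult_pmult_left_apply:
  assumes q: "qpath Q (v, xs)"
  shows "pmult Q (pmult Q f g) h (v, xs) = (\<Sum>j\<in>{0..length xs}. \<Sum>i\<in>{0..j}.
    f (v, take i xs) * g (pend Q (v, take i xs), take (j - i) (drop i xs)) * h (pend Q (v, take j xs), drop j xs))"
proof -
  have "pmult Q f g (v, take j xs) = (\<Sum>i\<in>{0..j}.
      f (v, take i xs) * g (pend Q (v, take i xs), take (j - i) (drop i xs)))" if "j \<le> length xs" for j
  proof -
    have "pmult Q f g (v, take j xs) = (\<Sum>i\<in>{0..j}.
        f (v, take i (take j xs)) * g (pend Q (v, take i (take j xs)), drop i (take j xs)))"
      using that qpath_take[OF q] by (simp add: pmult_apply min_def)
    also have "\<dots> = (\<Sum>i\<in>{0..j}. f (v, take i xs) * g (pend Q (v, take i xs), take (j - i) (drop i xs)))"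
      by (rule sum.cong) (auto simp: drop_take min_def)
    finally show ?thesis .
  qed
  then show ?thesis using q by (simp add: pmult_apply sum_distrib_right)
qed

lemma pmult_pmult_right_apply:
  assumes w: "wf_quiver Q" and q: "qpath Q (v, xs)"
  shows "pmult Q f (pmult Q g h) (v, xs) = (\<Sum>i\<in>{0..length xs}. \<Sum>j\<in>{i..length xs}.
    f (v, take i xs) * g (pend Q (v, take i xs), take (j - i) (drop i xs)) * h (pend Q (v, take j xs), drop j xs))"
proof -
  let ?n = "length xs"
  have "pmult Q g h (pend Q (v, take i xs), drop i xs) = (\<Sum>j\<in>{i..?n}.
      g (pend Q (v, take i xs), take (j - i) (drop i xs)) * h (pend Q (v, take j xs), drop j xs))"
    if i: "i \<le> ?n" for i
  proof -
    let ?G = "\<lambda>j. g (pend Q (v, take i xs), take (j - i) (drop i xs)) * h (pend Q (v, take j xs), drop j xs)"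
    have "pend Q (pend Q (v, take i xs), take l (drop i xs)) = pend Q (v, take (i + l) xs)" for l
      by (simp add: pend_pend take_add)
    then have "pmult Q g h (pend Q (v, take i xs), drop i xs) = (\<Sum>l\<in>{0..?n - i}. ?G (l + i))"
      using qpath_drop[OF w q i] by (simp add: pmult_apply add.commute)
    also have "\<dots> = sum ?G {0 + i..(?n - i) + i}" by (rule sum.shift_bounds_cl_nat_ivl[symmetric])
    finally show ?thesis using i by simp
  qed
  then show ?thesis using q by (simp add: pmult_apply sum_distrib_left mult.assoc)
qed

lemma pmult_assoc:
  assumes "wf_quiver Q"
  shows "pmult Q (pmult Q f g) h = pmult Q f (pmult Q g h)"
proof
  fix P :: "('a, 'b) path"
  obtain v xs where P: "P = (v, xs)" by (cases P)
  show "pmult Q (pmult Q f g) h P = pmult Q f (pmult Q g h) P"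
  proof (cases "qpath Q (v, xs)")
    case True
    then show ?thesis
      by (simp only: P pmult_pmult_left_apply pmult_pmult_right_apply[OF assms] sum_triangle_swap)
  qed (simp add: P pmult_apply)
qed

lemma pmult_padd_left: "pmult Q (padd f g) h = padd (pmult Q f h) (pmult Q g h)"
  by (rule ext) (simp add: pmult_def padd_def sum.distrib distrib_right)
lemma pmult_padd_right: "pmult Q h (padd f g) = padd (pmult Q h f) (pmult Q h g)"
  by (rule ext) (simp add: pmult_def padd_def sum.distrib distrib_left)
lemma pmult_psub_left: "pmult Q (psub f g) h = psub (pmult Q f h) (pmult Q g h)"
  by (rule ext) (simp add: pmult_def psub_def sum_subtractf left_diff_distrib)
lemma pmult_psub_right: "pmult Q h (psub f g) = psub (pmult Q h f) (pmult Q h g)"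
  by (rule ext) (simp add: pmult_def psub_def sum_subtractf right_diff_distrib)
lemma pmult_psmult_left: "pmult Q (psmult c f) h = psmult c (pmult Q f h)"
  by (rule ext) (simp add: pmult_def psmult_def sum_distrib_left mult.assoc)
lemma pmult_psmult_right: "pmult Q h (psmult c f) = psmult c (pmult Q h f)"
  by (rule ext) (simp add: pmult_def psmult_def sum_distrib_left mult.left_commute)
lemma pmult_pzero_left: "pmult Q pzero h = pzero"
  by (rule ext) (simp add: pmult_def pzero_def)
lemma pmult_pzero_right: "pmult Q h pzero = pzero"
  by (rule ext) (simp add: pmult_def pzero_def)

lemma pmult_idem_left: "pmult Q (idem v) f P = (if qpath Q P \<and> fst P = v then f P else 0)"
proof -
  obtain w xs where P: "P = (w, xs)" by (cases P)
  have "(\<Sum>k\<in>{0..length xs}. idem v (w, take k xs) * f (pend Q (w, take k xs), drop k xs))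
      = (\<Sum>k\<in>{0}. idem v (w, take k xs) * f (pend Q (w, take k xs), drop k xs))"
    by (rule sum.mono_neutral_right) (auto simp: idem_def pvec_def take_eq_Nil)
  then show ?thesis by (auto simp: P pmult_apply idem_def pvec_def pend_def)
qed

lemma pmult_idem_right: "pmult Q f (idem v) P = (if qpath Q P \<and> pend Q P = v then f P else 0)"
proof -
  obtain w xs where P: "P = (w, xs)" by (cases P)
  have "(\<Sum>k\<in>{0..length xs}. f (w, take k xs) * idem v (pend Q (w, take k xs), drop k xs))
      = (\<Sum>k\<in>{length xs}. f (w, take k xs) * idem v (pend Q (w, take k xs), drop k xs))"
    by (rule sum.mono_neutral_right) (auto simp: idem_def pvec_def)
  then show ?thesis by (auto simp: P pmult_apply idem_def pvec_def)
qed

lemma psub_self: "psub f f = pzero"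
  by (rule ext) (simp add: psub_def pzero_def)

lemma psub_eq_pzero_iff: "psub f g = pzero \<longleftrightarrow> f = g"
  by (metis fun_eq_iff psub_def pzero_def right_minus_eq)

lemma cq_if_support_covered:
  assumes "f \<in> cq Q" "g \<in> cq Q" "\<And>p. h p \<noteq> 0 \<Longrightarrow> f p \<noteq> 0 \<or> g p \<noteq> 0"
  shows "h \<in> cq Q"
proof -
  have "finite ({p. f p \<noteq> 0} \<union> {p. g p \<noteq> 0})" using assms(1,2) by (simp add: cq_def)
  then have "finite {p. h p \<noteq> 0}" by (rule finite_subset[rotated]) (use assms(3) in blast)
  then show ?thesis using assms unfolding cq_def by blast
qed

lemma cq_padd: "f \<in> cq Q \<Longrightarrow> g \<in> cq Q \<Longrightarrow> padd f g \<in> cq Q"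
  by (rule cq_if_support_covered[of f Q g]) (auto simp: padd_def)

lemma cq_psub: "f \<in> cq Q \<Longrightarrow> g \<in> cq Q \<Longrightarrow> psub f g \<in> cq Q"
  by (rule cq_if_support_covered[of f Q g]) (auto simp: psub_def)

lemma cq_psmult: "f \<in> cq Q \<Longrightarrow> psmult c f \<in> cq Q"
  by (rule cq_if_support_covered[of f Q f]) (auto simp: psmult_def)

lemma cq_pzero: "pzero \<in> cq Q"
  by (simp add: cq_def pzero_def)

lemma cq_pvec: "qpath Q p \<Longrightarrow> pvec p \<in> cq Q"
  by (simp add: cq_def pvec_def)

lemma cq_idem: "v \<in> verts Q \<Longrightarrow> idem v \<in> cq Q"
  by (simp add: idem_def cq_pvec qpath_def)

lemma pmult_support:
  "{p. pmult Q f g p \<noteq> 0} \<subseteq> (\<lambda>(p, q). (fst p, snd p @ snd q)) ` ({p. f p \<noteq> 0} \<times> {p. g p \<noteq> 0})"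
proof
  fix P assume "P \<in> {p. pmult Q f g p \<noteq> 0}"
  moreover obtain v xs where P: "P = (v, xs)" by (cases P)
  ultimately obtain k where "f (v, take k xs) * g (pend Q (v, take k xs), drop k xs) \<noteq> 0"
    by (auto simp: pmult_apply split: if_splits elim: sum.not_neutral_contains_not_neutral)
  then show "P \<in> (\<lambda>(p, q). (fst p, snd p @ snd q)) ` ({p. f p \<noteq> 0} \<times> {p. g p \<noteq> 0})"
    by (auto simp: P image_iff) (metis append_take_drop_id)
qed

lemma cq_pmult:
  assumes "f \<in> cq Q" "g \<in> cq Q"
  shows "pmult Q f g \<in> cq Q"
proof -
  have "finite ({p. f p \<noteq> 0} \<times> {p. g p \<noteq> 0})" using assms by (simp add: cq_def)
  then have "finite {p. pmult Q f g p \<noteq> 0}" by (rule finite_subset[OF pmult_support finite_imageI])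
  then show ?thesis by (auto simp: cq_def pmult_def)
qed

lemma cq_pcomm: "x \<in> cq Q \<Longrightarrow> f \<in> cq Q \<Longrightarrow> pcomm Q x f \<in> cq Q"
  by (simp add: pcomm_def cq_psub cq_pmult)

lemma pcomm_pcomm:
  assumes "wf_quiver Q"
  shows "pcomm Q (pcomm Q x y) f = psub (pcomm Q x (pcomm Q y f)) (pcomm Q y (pcomm Q x f))"
  unfolding pcomm_def pmult_psub_left pmult_psub_right pmult_assoc[OF assms]
  by (rule ext) (simp add: psub_def algebra_simps)

lemma pcomm_padd_left: "pcomm Q (padd x y) f = padd (pcomm Q x f) (pcomm Q y f)"
  unfolding pcomm_def pmult_padd_left pmult_padd_right by (rule ext) (simp add: psub_def padd_def)
lemma pcomm_padd_right: "pcomm Q x (padd f g) = padd (pcomm Q x f) (pcomm Q x g)"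
  unfolding pcomm_def pmult_padd_left pmult_padd_right by (rule ext) (simp add: psub_def padd_def)
lemma pcomm_psub_left: "pcomm Q (psub x y) f = psub (pcomm Q x f) (pcomm Q y f)"
  unfolding pcomm_def pmult_psub_left pmult_psub_right by (rule ext) (simp add: psub_def)
lemma pcomm_psmult_left: "pcomm Q (psmult c x) f = psmult c (pcomm Q x f)"
  unfolding pcomm_def pmult_psmult_left pmult_psmult_right
  by (rule ext) (simp add: psub_def psmult_def algebra_simps)
lemma pcomm_pzero_left: "pcomm Q pzero f = pzero"
  unfolding pcomm_def pmult_pzero_left pmult_pzero_right by (rule ext) (simp add: psub_def pzero_def)

section \<open>Derivations modulo an ideal\<close>

lemma
  assumes "is_der Q I D"
  shows der_cq: "f \<in> cq Q \<Longrightarrow> D f \<in> cq Q"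
    and der_wd: "f \<in> cq Q \<Longrightarrow> g \<in> cq Q \<Longrightarrow> psub f g \<in> I \<Longrightarrow> psub (D f) (D g) \<in> I"
    and der_lin: "f \<in> cq Q \<Longrightarrow> g \<in> cq Q \<Longrightarrow> psub (D (padd (psmult c f) g)) (padd (psmult c (D f)) (D g)) \<in> I"
    and der_leibniz: "f \<in> cq Q \<Longrightarrow> g \<in> cq Q \<Longrightarrow>
      psub (D (pmult Q f g)) (padd (pmult Q (D f) g) (pmult Q f (D g))) \<in> I"
    and der_idem: "v \<in> verts Q \<Longrightarrow> D (idem v) \<in> I"
  using assms unfolding is_der_def by blast+

lemma is_der_cong: "(\<And>f. f \<in> cq Q \<Longrightarrow> D f = D' f) \<Longrightarrow> is_der Q I D' \<Longrightarrow> is_der Q I D"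
  unfolding is_der_def by (simp add: cq_padd cq_psmult cq_pmult cq_idem)

locale path_ideal =
  fixes Q :: "('v, 'e) quiver" and I :: "('v, 'e) pelem set"
  assumes wf: "wf_quiver Q"
    and ideal_pzero: "pzero \<in> I"
    and ideal_padd: "x \<in> I \<Longrightarrow> y \<in> I \<Longrightarrow> padd x y \<in> I"
    and ideal_psmult: "x \<in> I \<Longrightarrow> psmult c x \<in> I"
    and ideal_pmult: "x \<in> I \<Longrightarrow> h \<in> cq Q \<Longrightarrow> pmult Q h x \<in> I \<and> pmult Q x h \<in> I"
begin

abbreviation modI :: "('v, 'e) pelem \<Rightarrow> ('v, 'e) pelem \<Rightarrow> bool" where
  "modI f g \<equiv> psub f g \<in> I"

lemma ideal_psub: "x \<in> I \<Longrightarrow> y \<in> I \<Longrightarrow> psub x y \<in> I"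
proof -
  assume "x \<in> I" "y \<in> I"
  moreover have "psub x y = padd x (psmult (-1) y)" by (rule ext) (simp add: psub_def padd_def psmult_def)
  ultimately show ?thesis by (simp add: ideal_padd ideal_psmult)
qed

lemma modI_refl: "modI f f"
  by (simp add: psub_self ideal_pzero)

lemma modI_trans: "modI f g \<Longrightarrow> modI g h \<Longrightarrow> modI f h"
  using ideal_padd[of "psub f g" "psub g h"] by (simp add: psub_def padd_def)

lemma modI_padd: "modI f g \<Longrightarrow> modI f' g' \<Longrightarrow> modI (padd f f') (padd g g')"
  using ideal_padd[of "psub f g" "psub f' g'"] by (simp add: psub_def padd_def algebra_simps)

lemma modI_psub: "modI f g \<Longrightarrow> modI f' g' \<Longrightarrow> modI (psub f f') (psub g g')"
  using ideal_psub[of "psub f g" "psub f' g'"] by (simp add: psub_def algebra_simps)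

lemma modI_psmult: "modI f g \<Longrightarrow> modI (psmult c f) (psmult c g)"
  using ideal_psmult[of "psub f g" c] by (simp add: psub_def psmult_def algebra_simps)

lemma ideal_pcomm: "x \<in> cq Q \<Longrightarrow> y \<in> I \<Longrightarrow> pcomm Q x y \<in> I"
  unfolding pcomm_def using ideal_pmult ideal_psub by blast

lemma der_padd:
  "is_der Q I D \<Longrightarrow> f \<in> cq Q \<Longrightarrow> g \<in> cq Q \<Longrightarrow> modI (D (padd f g)) (padd (D f) (D g))"
  using der_lin[of Q I D f g 1] by (simp add: psmult_def)

lemma der_pzero:
  assumes d: "is_der Q I D"
  shows "D pzero \<in> I"
proof -
  have "padd pzero pzero = pzero" by (simp add: padd_def pzero_def)
  then have "modI (D pzero) (padd (D pzero) (D pzero))"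
    using der_padd[OF d cq_pzero cq_pzero] by metis
  then have "psmult (-1) (psub (D pzero) (padd (D pzero) (D pzero))) \<in> I" by (rule ideal_psmult)
  moreover have "psmult (-1) (psub (D pzero) (padd (D pzero) (D pzero))) = D pzero"
    by (rule ext) (simp add: psmult_def psub_def padd_def)
  ultimately show ?thesis by simp
qed

lemma der_ideal:
  assumes d: "is_der Q I D" and x: "x \<in> I" "x \<in> cq Q"
  shows "D x \<in> I"
proof -
  have "psub x pzero = x" by (rule ext) (simp add: psub_def pzero_def)
  then have "modI (D x) (D pzero)" using der_wd[OF d x(2) cq_pzero] x(1) by simp
  then have "padd (psub (D x) (D pzero)) (D pzero) \<in> I" using ideal_padd der_pzero[OF d] by blast
  moreover have "padd (psub (D x) (D pzero)) (D pzero) = D x" by (rule ext) (simp add: psub_def padd_def)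
  ultimately show ?thesis by simp
qed

lemma is_der_dadd:
  assumes d1: "is_der Q I D1" and d2: "is_der Q I D2"
  shows "is_der Q I (dadd D1 D2)"
  unfolding is_der_def
proof (intro conjI ballI allI impI)
  fix f g c assume f: "f \<in> cq Q" and g: "g \<in> cq Q"
  show "modI (dadd D1 D2 (padd (psmult c f) g)) (padd (psmult c (dadd D1 D2 f)) (dadd D1 D2 g))"
    using modI_padd[OF der_lin[OF d1 f g, of c] der_lin[OF d2 f g, of c]]
    by (simp add: dadd_def) (simp add: padd_def psmult_def algebra_simps)
  show "modI (dadd D1 D2 (pmult Q f g)) (padd (pmult Q (dadd D1 D2 f) g) (pmult Q f (dadd D1 D2 g)))"
    using modI_padd[OF der_leibniz[OF d1 f g] der_leibniz[OF d2 f g]]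
    by (simp add: dadd_def pmult_padd_left pmult_padd_right) (simp add: padd_def algebra_simps)
  assume "modI f g"
  then show "modI (dadd D1 D2 f) (dadd D1 D2 g)"
    using modI_padd[OF der_wd[OF d1 f g] der_wd[OF d2 f g]] by (simp add: dadd_def)
next
  fix v assume "v \<in> verts Q"
  then show "dadd D1 D2 (idem v) \<in> I" using der_idem[OF d1] der_idem[OF d2] by (simp add: dadd_def ideal_padd)
qed (use der_cq[OF d1] der_cq[OF d2] in \<open>auto simp: dadd_def cq_padd\<close>)

lemma is_der_dsmult:
  assumes d: "is_der Q I D"
  shows "is_der Q I (dsmult c D)"
  unfolding is_der_def
proof (intro conjI ballI allI impI)
  fix f g c' assume f: "f \<in> cq Q" and g: "g \<in> cq Q"
  show "modI (dsmult c D (padd (psmult c' f) g)) (padd (psmult c' (dsmult c D f)) (dsmult c D g))"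
    using modI_psmult[OF der_lin[OF d f g, of c'], of c]
    by (simp add: dsmult_def) (simp add: padd_def psmult_def algebra_simps)
  show "modI (dsmult c D (pmult Q f g)) (padd (pmult Q (dsmult c D f) g) (pmult Q f (dsmult c D g)))"
    using modI_psmult[OF der_leibniz[OF d f g], of c]
    by (simp add: dsmult_def pmult_psmult_left pmult_psmult_right) (simp add: padd_def psmult_def algebra_simps)
  assume "modI f g"
  then show "modI (dsmult c D f) (dsmult c D g)"
    using modI_psmult[OF der_wd[OF d f g]] by (simp add: dsmult_def)
next
  fix v assume "v \<in> verts Q"
  then show "dsmult c D (idem v) \<in> I" using der_idem[OF d] by (simp add: dsmult_def ideal_psmult)
qed (use der_cq[OF d] in \<open>auto simp: dsmult_def cq_psmult\<close>)

text \<open>In the bracket \<open>D\<^sub>1 D\<^sub>2 - D\<^sub>2 D\<^sub>1\<close> the mixed terms of the second-order Leibniz rule cancel.\<close>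

lemma der_comp_lin:
  assumes d1: "is_der Q I D1" and d2: "is_der Q I D2" and f: "f \<in> cq Q" and g: "g \<in> cq Q"
  shows "modI (D1 (D2 (padd (psmult c f) g))) (padd (psmult c (D1 (D2 f))) (D1 (D2 g)))"
proof -
  have "modI (D1 (D2 (padd (psmult c f) g))) (D1 (padd (psmult c (D2 f)) (D2 g)))"
    using der_wd[OF d1 _ _ der_lin[OF d2 f g, of c]] der_cq[OF d2] f g by (simp add: cq_padd cq_psmult)
  then show ?thesis using der_lin[OF d1 der_cq[OF d2 f] der_cq[OF d2 g]] by (rule modI_trans)
qed

lemma der_comp_leibniz:
  assumes d1: "is_der Q I D1" and d2: "is_der Q I D2" and f: "f \<in> cq Q" and g: "g \<in> cq Q"
  shows "modI (D1 (D2 (pmult Q f g)))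
    (padd (padd (pmult Q (D1 (D2 f)) g) (pmult Q (D2 f) (D1 g))) (padd (pmult Q (D1 f) (D2 g)) (pmult Q f (D1 (D2 g)))))"
proof -
  have c2f: "D2 f \<in> cq Q" and c2g: "D2 g \<in> cq Q" using der_cq[OF d2] f g by auto
  have "modI (D1 (D2 (pmult Q f g))) (D1 (padd (pmult Q (D2 f) g) (pmult Q f (D2 g))))"
    using der_wd[OF d1 der_cq[OF d2 cq_pmult[OF f g]] _ der_leibniz[OF d2 f g]] c2f c2g f g
    by (simp add: cq_padd cq_pmult)
  moreover have "modI (D1 (padd (pmult Q (D2 f) g) (pmult Q f (D2 g))))
      (padd (D1 (pmult Q (D2 f) g)) (D1 (pmult Q f (D2 g))))"
    using der_padd[OF d1] c2f c2g f g by (simp add: cq_pmult)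
  ultimately show ?thesis
    using modI_trans modI_padd[OF der_leibniz[OF d1 c2f g] der_leibniz[OF d1 f c2g]] by blast
qed

lemma is_der_dbr:
  assumes d1: "is_der Q I D1" and d2: "is_der Q I D2"
  shows "is_der Q I (dbr D1 D2)"
  unfolding is_der_def
proof (intro conjI ballI allI impI)
  fix f g c assume f: "f \<in> cq Q" and g: "g \<in> cq Q"
  show "modI (dbr D1 D2 (padd (psmult c f) g)) (padd (psmult c (dbr D1 D2 f)) (dbr D1 D2 g))"
    using modI_psub[OF der_comp_lin[OF d1 d2 f g, of c] der_comp_lin[OF d2 d1 f g, of c]]
    by (simp add: dbr_def) (simp add: psub_def padd_def psmult_def algebra_simps)
  show "modI (dbr D1 D2 (pmult Q f g)) (padd (pmult Q (dbr D1 D2 f) g) (pmult Q f (dbr D1 D2 g)))"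
    using modI_psub[OF der_comp_leibniz[OF d1 d2 f g] der_comp_leibniz[OF d2 d1 f g]]
    by (simp add: dbr_def pmult_psub_left pmult_psub_right) (simp add: psub_def padd_def algebra_simps)
  assume "modI f g"
  then show "modI (dbr D1 D2 f) (dbr D1 D2 g)"
    using modI_psub[OF der_wd[OF d1 der_cq[OF d2 f] der_cq[OF d2 g] der_wd[OF d2 f g]]
        der_wd[OF d2 der_cq[OF d1 f] der_cq[OF d1 g] der_wd[OF d1 f g]]]
    by (simp add: dbr_def)
next
  fix v assume v: "v \<in> verts Q"
  have "D1 (D2 (idem v)) \<in> I" "D2 (D1 (idem v)) \<in> I"
    using der_ideal[OF d1 der_idem[OF d2 v] der_cq[OF d2 cq_idem[OF v]]]
      der_ideal[OF d2 der_idem[OF d1 v] der_cq[OF d1 cq_idem[OF v]]] .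
  then show "dbr D1 D2 (idem v) \<in> I" by (simp add: dbr_def ideal_psub)
qed (use der_cq[OF d1] der_cq[OF d2] in \<open>simp add: dbr_def cq_psub\<close>)

definition inner_elem :: "('v, 'e) pelem \<Rightarrow> bool" where
  "inner_elem x \<longleftrightarrow> x \<in> cq Q \<and> (\<forall>v\<in>verts Q. pcomm Q x (idem v) \<in> I)"

lemma is_inner_iff: "is_inner Q I D \<longleftrightarrow> (\<exists>x. inner_elem x \<and> (\<forall>f\<in>cq Q. modI (D f) (pcomm Q x f)))"
  unfolding is_inner_def inner_elem_def by blast

lemma inner_elem_pzero: "inner_elem pzero"
  by (simp add: inner_elem_def cq_pzero pcomm_pzero_left ideal_pzero)

lemma inner_elem_padd: "inner_elem x \<Longrightarrow> inner_elem y \<Longrightarrow> inner_elem (padd x y)"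
  by (simp add: inner_elem_def cq_padd pcomm_padd_left ideal_padd)

lemma inner_elem_psub: "inner_elem x \<Longrightarrow> inner_elem y \<Longrightarrow> inner_elem (psub x y)"
  by (simp add: inner_elem_def cq_psub pcomm_psub_left ideal_psub)

lemma inner_elem_psmult: "inner_elem x \<Longrightarrow> inner_elem (psmult c x)"
  by (simp add: inner_elem_def cq_psmult pcomm_psmult_left ideal_psmult)

lemma inner_elem_pcomm:
  assumes "inner_elem x" "inner_elem y"
  shows "inner_elem (pcomm Q x y)"
  unfolding inner_elem_def
proof (intro conjI ballI)
  show "pcomm Q x y \<in> cq Q" using assms by (simp add: inner_elem_def cq_pcomm)
  fix v assume "v \<in> verts Q"
  then have "psub (pcomm Q x (pcomm Q y (idem v))) (pcomm Q y (pcomm Q x (idem v))) \<in> I"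
    using assms ideal_pcomm ideal_psub unfolding inner_elem_def by blast
  then show "pcomm Q (pcomm Q x y) (idem v) \<in> I" by (simp add: pcomm_pcomm[OF wf])
qed

lemma der_eqI_pointwise: "(\<And>f. f \<in> cq Q \<Longrightarrow> D1 f = D2 f) \<Longrightarrow> der_eq Q I D1 D2"
  unfolding der_eq_def is_inner_iff
  by (rule exI[of _ pzero]) (simp add: inner_elem_pzero pcomm_pzero_left dsub_def psub_self modI_refl ideal_pzero)

lemma pzero_der_in_lie_gen: "(\<lambda>f. pzero) \<in> lie_gen Q I G"
proof (rule lie_gen.inner)
  show "is_der Q I (\<lambda>f. pzero)"
    unfolding is_der_def
    by (simp add: modI_refl ideal_pzero cq_pzero pmult_pzero_left pmult_pzero_right)
      (simp add: padd_def psmult_def pzero_def modI_refl)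
  show "is_inner Q I (\<lambda>f. pzero)"
    unfolding is_inner_iff by (rule exI[of _ pzero]) (simp add: inner_elem_pzero pcomm_pzero_left modI_refl)
qed

end

section \<open>Matrices indexed by \<open>{1..a}\<close>\<close>

definition mat_mult :: "nat \<Rightarrow> (nat \<Rightarrow> nat \<Rightarrow> complex) \<Rightarrow> (nat \<Rightarrow> nat \<Rightarrow> complex) \<Rightarrow> nat \<Rightarrow> nat \<Rightarrow> complex" where
  "mat_mult a A B = (\<lambda>p q. \<Sum>r\<in>{1..a}. A p r * B r q)"

definition mat_trace :: "nat \<Rightarrow> (nat \<Rightarrow> nat \<Rightarrow> complex) \<Rightarrow> complex" where
  "mat_trace a T = (\<Sum>p\<in>{1..a}. T p p)"

definition mat_unit :: "nat \<Rightarrow> nat \<Rightarrow> nat \<Rightarrow> nat \<Rightarrow> complex" where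
  "mat_unit i j = (\<lambda>p q. if p = i \<and> q = j then 1 else 0)"

lemma mat_trace_add: "mat_trace a (\<lambda>p q. A p q + B p q) = mat_trace a A + mat_trace a B"
  by (simp add: mat_trace_def sum.distrib)

lemma mat_trace_smult: "mat_trace a (\<lambda>p q. c * A p q) = c * mat_trace a A"
  by (simp add: mat_trace_def sum_distrib_left)

lemma mat_trace_diff: "mat_trace a (\<lambda>p q. A p q - B p q) = mat_trace a A - mat_trace a B"
  by (simp add: mat_trace_def sum_subtractf)

lemma mat_trace_commutator: "mat_trace a (\<lambda>p q. mat_mult a A B p q - mat_mult a B A p q) = 0"
proof -
  have "(\<Sum>p\<in>{1..a}. \<Sum>r\<in>{1..a}. A p r * B r p) = (\<Sum>r\<in>{1..a}. \<Sum>p\<in>{1..a}. A p r * B r p)"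
    by (rule sum.swap)
  then show ?thesis by (simp add: mat_trace_def mat_mult_def sum_subtractf mult.commute)
qed

lemma mat_trace_unit:
  assumes "i \<in> {1..a}"
  shows "mat_trace a (mat_unit i j) = (if i = j then 1 else 0)"
proof -
  have "mat_trace a (mat_unit i j) = (\<Sum>p\<in>{1..a}. if p = i then (if i = j then 1 else 0) else 0)"
    unfolding mat_trace_def mat_unit_def by (rule sum.cong) auto
  then show ?thesis using assms by simp
qed

lemma mat_mult_scalar_shift:
  assumes p: "p \<in> {1..a}" and q: "q \<in> {1..a}"
    and A: "\<And>p q. p \<in> {1..a} \<Longrightarrow> q \<in> {1..a} \<Longrightarrow> A p q = c * (if p = q then 1 else 0) + A' p q"
    and B: "\<And>p q. p \<in> {1..a} \<Longrightarrow> q \<in> {1..a} \<Longrightarrow> B p q = d * (if p = q then 1 else 0) + B' p q"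
  shows "mat_mult a A B p q = c * d * (if p = q then 1 else 0) + c * B' p q + d * A' p q + mat_mult a A' B' p q"
proof -
  have "mat_mult a A B p q = (\<Sum>r\<in>{1..a}. (if r = p then c * d * (if p = q then 1 else 0) + c * B' p q else 0)
       + (if r = q then d * A' p q else 0) + A' p r * B' r q)"
    unfolding mat_mult_def using p q by (intro sum.cong) (auto simp: A B algebra_simps)
  also have "\<dots> = c * d * (if p = q then 1 else 0) + c * B' p q + d * A' p q + mat_mult a A' B' p q"
    using p q by (simp add: sum.distrib mat_mult_def)
  finally show ?thesis .
qed

text \<open>\<open>E\<^sub>i\<^sub>j\<close> (\<open>i \<noteq> j\<close>) and \<open>E\<^sub>j\<^sub>j - E\<^sub>1\<^sub>1\<close> are the matrices of the generators \<open>w\<^sub>i\<^sub>j\<close> and \<open>x\<^sub>j\<close>.\<close>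

lemma traceless_mat_expansion:
  assumes t: "mat_trace a T = 0" and p: "p \<in> {1..a}" and q: "q \<in> {1..a}"
  shows "T p q = (\<Sum>(i, j)\<in>{(i, j). i \<in> {1..a} \<and> j \<in> {1..a} \<and> i \<noteq> j}. T i j * mat_unit i j p q)
    + (\<Sum>j\<in>{2..a}. T j j * (mat_unit j j p q - mat_unit 1 1 p q))"
proof -
  define OD where "OD = {(i, j). i \<in> {1..a} \<and> j \<in> {1..a} \<and> i \<noteq> j}"
  have "finite OD" unfolding OD_def by (rule finite_subset[of _ "{1..a} \<times> {1..a}"]) auto
  have "(\<Sum>(i, j)\<in>OD. T i j * mat_unit i j p q) = (\<Sum>x\<in>OD. if x = (p, q) then T p q else 0)"
    by (rule sum.cong) (auto simp: mat_unit_def split: if_splits)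
  also have "\<dots> = (if (p, q) \<in> OD then T p q else 0)" using \<open>finite OD\<close> by (simp add: sum.delta')
  finally have off: "(\<Sum>(i, j)\<in>OD. T i j * mat_unit i j p q) = (if p \<noteq> q then T p q else 0)"
    using p q by (simp add: OD_def)
  have diag: "(\<Sum>j\<in>{2..a}. T j j * (mat_unit j j p q - mat_unit 1 1 p q))
      = (\<Sum>j\<in>{2..a}. if j = p then (if p = q then T j j else 0) else 0)
        - (if p = 1 \<and> q = 1 then (\<Sum>j\<in>{2..a}. T j j) else 0)"
    by (simp add: mat_unit_def right_diff_distrib sum_subtractf sum_distrib_right[symmetric] if_distrib
        cong: if_cong) (auto intro!: sum.cong simp: sum_negf)
  have "{1..a} = insert 1 {2..a}" using p by auto
  then have "T 1 1 + (\<Sum>j\<in>{2..a}. T j j) = 0" using t by (simp add: mat_trace_def)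
  then show ?thesis
    unfolding OD_def[symmetric] off diag using p q
    by (auto simp: eq_neg_iff_add_eq_0 add.commute)
qed

section \<open>A bundle of parallel arrows\<close>

text \<open>\<open>mat_der z0 a \<alpha> T\<close> sends the arrow \<open>\<alpha> p\<close> to \<open>\<Sum>\<^sub>r T p r \<alpha> r\<close> and every other path to \<open>0\<close>.\<close>

definition mat_der :: "'v \<Rightarrow> nat \<Rightarrow> (nat \<Rightarrow> 'e) \<Rightarrow> (nat \<Rightarrow> nat \<Rightarrow> complex) \<Rightarrow> ('v, 'e) dmap" where
  "mat_der z0 a \<alpha> T f =
     (\<lambda>P. \<Sum>r\<in>{1..a}. if P = (z0, [\<alpha> r]) then (\<Sum>p\<in>{1..a}. T p r * f (z0, [\<alpha> p])) else 0)"

text \<open>Abstracts the arrows \<open>0 \<rightarrow> \<omega>\<close> of a toupie algebra: only these local properties of the quiver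
  and of the ideal are used.\<close>

locale parallel_arrows = path_ideal Q I
  for Q :: "('v, 'e) quiver" and I :: "('v, 'e) pelem set" +
  fixes z0 om :: 'v and a :: nat and \<alpha> :: "nat \<Rightarrow> 'e"
  assumes arrow: "p \<in> {1..a} \<Longrightarrow> \<alpha> p \<in> arrs Q \<and> src Q (\<alpha> p) = z0 \<and> tgt Q (\<alpha> p) = om"
    and arrow_inj: "inj_on \<alpha> {1..a}"
    and no_arrow_into_source: "g \<in> arrs Q \<Longrightarrow> tgt Q g \<noteq> z0"
    and no_arrow_out_of_sink: "g \<in> arrs Q \<Longrightarrow> src Q g \<noteq> om"
    and source_vertex: "z0 \<in> verts Q"
    and ideal_vanishes_short: "x \<in> I \<Longrightarrow> length (snd P) \<le> 1 \<Longrightarrow> x P = 0"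
begin

abbreviation arrow_path :: "nat \<Rightarrow> ('v, 'e) path" where
  "arrow_path r \<equiv> (z0, [\<alpha> r])"

abbreviation L :: "(nat \<Rightarrow> nat \<Rightarrow> complex) \<Rightarrow> ('v, 'e) dmap" where
  "L \<equiv> mat_der z0 a \<alpha>"

lemma ideal_arrow_path: "x \<in> I \<Longrightarrow> x (arrow_path r) = 0"
  by (rule ideal_vanishes_short) auto

lemma sink_vertex: "p \<in> {1..a} \<Longrightarrow> om \<in> verts Q"
  using arrow wf by (fastforce simp: wf_quiver_def)

lemma source_ne_sink: "p \<in> {1..a} \<Longrightarrow> z0 \<noteq> om"
  using arrow no_arrow_into_source by metis

lemma qpath_arrow_path: "r \<in> {1..a} \<Longrightarrow> qpath Q (arrow_path r)"
  using arrow source_vertex by (simp add: qpath_def)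

lemma arrow_path_eq_iff: "r \<in> {1..a} \<Longrightarrow> s \<in> {1..a} \<Longrightarrow> arrow_path r = arrow_path s \<longleftrightarrow> r = s"
  using inj_on_eq_iff[OF arrow_inj] by simp

text \<open>No path can be extended beyond \<open>\<alpha> r\<close> on either side.\<close>

lemma qpath_through_arrow:
  assumes q: "qpath Q (v, xs)" and r: "r \<in> {1..a}" and m: "\<alpha> r \<in> set xs"
  shows "(v, xs) = arrow_path r"
proof -
  obtain i where i: "i < length xs" "xs ! i = \<alpha> r" using m by (metis in_set_conv_nth)
  have ar: "set xs \<subseteq> arrs Q" using q by (simp add: qpath_def)
  have i0: "i = 0"
  proof (rule ccontr)
    assume "i \<noteq> 0"
    then obtain j where j: "i = Suc j" by (cases i) auto
    then have "tgt Q (xs ! j) = z0" using q i arrow[OF r] by (simp add: qpath_def)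
    moreover have "xs ! j \<in> arrs Q" using ar i j by (simp add: subset_iff)
    ultimately show False using no_arrow_into_source by blast
  qed
  have "length xs = 1"
  proof (rule ccontr)
    assume "length xs \<noteq> 1"
    then have "Suc 0 < length xs" using i by simp
    then have "src Q (xs ! 1) = om" "xs ! 1 \<in> arrs Q"
      using q arrow[OF r] i i0 ar by (auto simp: qpath_def subset_iff)
    then show False using no_arrow_out_of_sink by blast
  qed
  then have xs: "xs = [\<alpha> r]" using i i0 by (cases xs) auto
  then show ?thesis using q arrow[OF r] by (simp add: qpath_def)
qed

lemma pmult_arrow_path:
  "r \<in> {1..a} \<Longrightarrow> pmult Q f g (arrow_path r) = f (z0, []) * g (arrow_path r) + f (arrow_path r) * g (om, [])"
  using qpath_arrow_path[of r] arrow[of r] by (simp add: pmult_apply pend_def)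

definition on_arrows :: "('v, 'e) pelem \<Rightarrow> bool" where
  "on_arrows h \<longleftrightarrow> (\<forall>P. h P \<noteq> 0 \<longrightarrow> (\<exists>r\<in>{1..a}. P = arrow_path r))"

lemma on_arrows_eqI:
  assumes "on_arrows F" "on_arrows G" "\<And>r. r \<in> {1..a} \<Longrightarrow> F (arrow_path r) = G (arrow_path r)"
  shows "F = G"
proof
  fix P show "F P = G P"
  proof (cases "\<exists>r\<in>{1..a}. P = arrow_path r")
    case True then show ?thesis using assms(3) by auto
  next
    case False then show ?thesis using assms(1,2) unfolding on_arrows_def by metis
  qed
qed

lemma on_arrows_trivial_path: "on_arrows h \<Longrightarrow> h (v, []) = 0"
  unfolding on_arrows_def by auto

lemma on_arrows_mat_der: "on_arrows (L T f)"
  unfolding on_arrows_def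
proof (intro allI impI)
  fix P assume "L T f P \<noteq> 0"
  then obtain r where "r \<in> {1..a}" "(if P = arrow_path r then (\<Sum>p\<in>{1..a}. T p r * f (arrow_path p)) else 0) \<noteq> 0"
    unfolding mat_der_def by (rule sum.not_neutral_contains_not_neutral)
  then show "\<exists>r\<in>{1..a}. P = arrow_path r" by (auto split: if_splits)
qed

lemma on_arrows_padd: "on_arrows F \<Longrightarrow> on_arrows G \<Longrightarrow> on_arrows (padd F G)"
  unfolding on_arrows_def padd_def by (metis add.right_neutral)

lemma on_arrows_psub: "on_arrows F \<Longrightarrow> on_arrows G \<Longrightarrow> on_arrows (psub F G)"
  unfolding on_arrows_def psub_def by (metis diff_zero diff_self)

lemma on_arrows_psmult: "on_arrows F \<Longrightarrow> on_arrows (psmult c F)"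
  unfolding on_arrows_def psmult_def by (metis mult_zero_right)

lemma on_arrows_pzero: "on_arrows pzero"
  unfolding on_arrows_def pzero_def by simp

lemmas on_arrows_intros = on_arrows_mat_der on_arrows_padd on_arrows_psub on_arrows_psmult on_arrows_pzero

lemma mat_der_arrow_path: "r \<in> {1..a} \<Longrightarrow> L T f (arrow_path r) = (\<Sum>p\<in>{1..a}. T p r * f (arrow_path p))"
proof -
  assume r: "r \<in> {1..a}"
  have "L T f (arrow_path r) = (\<Sum>r'\<in>{1..a}. if r' = r then (\<Sum>p\<in>{1..a}. T p r' * f (arrow_path p)) else 0)"
    unfolding mat_der_def by (rule sum.cong) (use r arrow_path_eq_iff in auto)
  then show ?thesis using r by simp
qed

lemma pmult_vanishes_off_arrows:
  assumes h: "on_arrows h" and P: "\<not> (\<exists>r\<in>{1..a}. P = arrow_path r)"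
  shows "pmult Q x h P = 0" and "pmult Q h x P = 0"
proof -
  obtain v xs where vxs: "P = (v, xs)" by (cases P)
  have drop: "h (pend Q (v, take k xs), drop k xs) = 0" if q: "qpath Q (v, xs)" for k
  proof (rule ccontr)
    assume "h (pend Q (v, take k xs), drop k xs) \<noteq> 0"
    then obtain r where r: "r \<in> {1..a}" "(pend Q (v, take k xs), drop k xs) = arrow_path r"
      using h unfolding on_arrows_def by blast
    then have "\<alpha> r \<in> set xs" by (metis in_set_dropD list.set_intros(1) prod.inject)
    then show False using qpath_through_arrow[OF q r(1)] P vxs r(1) by blast
  qed
  have take: "h (v, take k xs) = 0" if q: "qpath Q (v, xs)" for k
  proof (rule ccontr)
    assume "h (v, take k xs) \<noteq> 0"
    then obtain r where r: "r \<in> {1..a}" "(v, take k xs) = arrow_path r"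
      using h unfolding on_arrows_def by blast
    then have "\<alpha> r \<in> set xs" by (metis in_set_takeD list.set_intros(1) prod.inject)
    then show False using qpath_through_arrow[OF q r(1)] P vxs r(1) by blast
  qed
  show "pmult Q x h P = 0" and "pmult Q h x P = 0"
    using drop take by (simp_all add: vxs pmult_apply)
qed

lemma pmult_on_arrows_left:
  assumes h: "on_arrows h"
  shows "pmult Q x h = psmult (x (z0, [])) h"
proof
  fix P show "pmult Q x h P = psmult (x (z0, [])) h P"
  proof (cases "\<exists>r\<in>{1..a}. P = arrow_path r")
    case True
    then show ?thesis using on_arrows_trivial_path[OF h] by (auto simp: pmult_arrow_path psmult_def)
  next
    case False
    then have "h P = 0" using h unfolding on_arrows_def by metis
    then show ?thesis using pmult_vanishes_off_arrows(1)[OF h False] by (simp add: psmult_def)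
  qed
qed

lemma pmult_on_arrows_right:
  assumes h: "on_arrows h"
  shows "pmult Q h x = psmult (x (om, [])) h"
proof
  fix P show "pmult Q h x P = psmult (x (om, [])) h P"
  proof (cases "\<exists>r\<in>{1..a}. P = arrow_path r")
    case True
    then show ?thesis using on_arrows_trivial_path[OF h] by (auto simp: pmult_arrow_path psmult_def)
  next
    case False
    then have "h P = 0" using h unfolding on_arrows_def by metis
    then show ?thesis using pmult_vanishes_off_arrows(2)[OF h False] by (simp add: psmult_def)
  qed
qed

lemma cq_mat_der: "L T f \<in> cq Q"
proof -
  have "{P. L T f P \<noteq> 0} \<subseteq> arrow_path ` {1..a}" using on_arrows_mat_der[of T f] unfolding on_arrows_def by blast
  then have "finite {P. L T f P \<noteq> 0}" by (rule finite_subset) simp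
  then show ?thesis using on_arrows_mat_der[of T f] qpath_arrow_path unfolding on_arrows_def cq_def by blast
qed

lemma mat_der_lin: "L T (padd (psmult c f) g) = padd (psmult c (L T f)) (L T g)"
  by (rule on_arrows_eqI; (intro on_arrows_intros)?; auto simp: mat_der_arrow_path padd_def psmult_def
      sum.distrib sum_distrib_left algebra_simps)

lemma mat_der_padd: "L T (padd f g) = padd (L T f) (L T g)"
  by (rule on_arrows_eqI; (intro on_arrows_intros)?; auto simp: mat_der_arrow_path padd_def sum.distrib algebra_simps)

lemma mat_der_psub: "L T (psub f g) = psub (L T f) (L T g)"
  by (rule on_arrows_eqI; (intro on_arrows_intros)?; auto simp: mat_der_arrow_path psub_def sum_subtractf algebra_simps)

lemma mat_der_psmult: "L T (psmult c f) = psmult c (L T f)"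
  by (rule on_arrows_eqI; (intro on_arrows_intros)?; auto simp: mat_der_arrow_path psmult_def sum_distrib_left algebra_simps)

lemma mat_der_pzero: "L T pzero = pzero"
  by (rule on_arrows_eqI; (intro on_arrows_intros)?; auto simp: mat_der_arrow_path pzero_def)

lemma mat_der_ideal: "x \<in> I \<Longrightarrow> L T x = pzero"
  by (rule on_arrows_eqI; (intro on_arrows_intros)?; auto simp: mat_der_arrow_path pzero_def ideal_arrow_path)

lemma mat_der_idem: "L T (idem v) = pzero"
  by (rule on_arrows_eqI; (intro on_arrows_intros)?; auto simp: mat_der_arrow_path pzero_def idem_def pvec_def)

lemma mat_der_pmult: "L T (pmult Q f g) = padd (pmult Q (L T f) g) (pmult Q f (L T g))"
  unfolding pmult_on_arrows_left[OF on_arrows_mat_der] pmult_on_arrows_right[OF on_arrows_mat_der]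
  by (rule on_arrows_eqI; (intro on_arrows_intros)?; auto simp: mat_der_arrow_path padd_def psmult_def
      pmult_arrow_path sum.distrib sum_distrib_left algebra_simps)

lemma is_der_mat_der: "is_der Q I (L T)"
  unfolding is_der_def
  by (simp add: cq_mat_der mat_der_lin mat_der_pmult mat_der_idem modI_refl ideal_pzero
      flip: mat_der_psub) (simp add: mat_der_ideal ideal_pzero)

lemma mat_der_comp: "L T1 (L T2 f) = L (mat_mult a T2 T1) f"
proof (rule on_arrows_eqI[OF on_arrows_mat_der on_arrows_mat_der])
  fix r assume r: "r \<in> {1..a}"
  have "L T1 (L T2 f) (arrow_path r) = (\<Sum>p\<in>{1..a}. \<Sum>s\<in>{1..a}. T2 s p * T1 p r * f (arrow_path s))"
    using r by (simp add: mat_der_arrow_path sum_distrib_left algebra_simps)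
  also have "\<dots> = (\<Sum>s\<in>{1..a}. \<Sum>p\<in>{1..a}. T2 s p * T1 p r * f (arrow_path s))"
    by (rule sum.swap)
  also have "\<dots> = L (mat_mult a T2 T1) f (arrow_path r)"
    using r by (simp add: mat_der_arrow_path mat_mult_def sum_distrib_right)
  finally show "L T1 (L T2 f) (arrow_path r) = L (mat_mult a T2 T1) f (arrow_path r)" .
qed

lemma mat_der_mat_lin: "L (\<lambda>p q. c * T1 p q + T2 p q) f = padd (psmult c (L T1 f)) (L T2 f)"
  by (rule on_arrows_eqI; (intro on_arrows_intros)?; auto simp: mat_der_arrow_path padd_def psmult_def
      sum.distrib sum_distrib_left algebra_simps)

lemma mat_der_mat_add: "L (\<lambda>p q. T1 p q + T2 p q) f = padd (L T1 f) (L T2 f)"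
  using mat_der_mat_lin[of 1 T1 T2 f] by (simp add: psmult_def)

lemma mat_der_mat_diff: "L (\<lambda>p q. T1 p q - T2 p q) f = psub (L T1 f) (L T2 f)"
  by (rule on_arrows_eqI; (intro on_arrows_intros)?; auto simp: mat_der_arrow_path psub_def sum_subtractf algebra_simps)

lemma mat_der_mat_smult: "L (\<lambda>p q. c * T p q) f = psmult c (L T f)"
  by (rule on_arrows_eqI; (intro on_arrows_intros)?; auto simp: mat_der_arrow_path psmult_def sum_distrib_left algebra_simps)

lemma mat_der_mat_zero: "L (\<lambda>p q. 0) f = pzero"
  by (rule on_arrows_eqI; (intro on_arrows_intros)?; auto simp: mat_der_arrow_path pzero_def)

lemma mat_der_mat_cong:
  "(\<And>p q. p \<in> {1..a} \<Longrightarrow> q \<in> {1..a} \<Longrightarrow> T1 p q = T2 p q) \<Longrightarrow> L T1 f = L T2 f"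
  by (rule on_arrows_eqI; (intro on_arrows_intros)?; auto simp: mat_der_arrow_path)

lemma pcomm_arrow_path: "r \<in> {1..a} \<Longrightarrow> pcomm Q x f (arrow_path r) =
   x (z0, []) * f (arrow_path r) + x (arrow_path r) * f (om, []) - f (z0, []) * x (arrow_path r) - f (arrow_path r) * x (om, [])"
  by (simp add: pcomm_def psub_def pmult_arrow_path)

lemma inner_elem_arrow_path:
  assumes x: "inner_elem x" and r: "r \<in> {1..a}"
  shows "x (arrow_path r) = 0"
proof -
  have "pcomm Q x (idem om) (arrow_path r) = 0"
    using x sink_vertex[OF r] ideal_arrow_path unfolding inner_elem_def by blast
  moreover have "pcomm Q x (idem om) (arrow_path r) = x (arrow_path r)"
    using source_ne_sink[OF r] r by (simp add: pcomm_arrow_path idem_def pvec_def)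
  ultimately show ?thesis by simp
qed

lemma mat_der_pcomm:
  assumes "inner_elem x"
  shows "L T (pcomm Q x f) = psmult (x (z0, []) - x (om, [])) (L T f)"
  by (rule on_arrows_eqI; (intro on_arrows_intros)?; auto simp: mat_der_arrow_path psmult_def pcomm_arrow_path
      inner_elem_arrow_path[OF assms] sum_distrib_left sum_subtractf sum.distrib algebra_simps)

lemma pcomm_mat_der: "pcomm Q x (L T f) = psmult (x (z0, []) - x (om, [])) (L T f)"
  unfolding pcomm_def pmult_on_arrows_left[OF on_arrows_mat_der] pmult_on_arrows_right[OF on_arrows_mat_der]
  by (rule ext) (simp add: psub_def psmult_def algebra_simps)

lemma arr_arrow: "p \<in> {1..a} \<Longrightarrow> arr Q (\<alpha> p) = pvec (arrow_path p)"
  using arrow by (simp add: arr_def)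

lemma cq_arr_arrow: "p \<in> {1..a} \<Longrightarrow> arr Q (\<alpha> p) \<in> cq Q"
  by (simp add: arr_arrow cq_pvec qpath_arrow_path)

lemma on_arrows_arr: "q \<in> {1..a} \<Longrightarrow> on_arrows (arr Q (\<alpha> q))"
  unfolding on_arrows_def by (auto simp: arr_arrow pvec_def)

lemma arr_arrow_path:
  "p \<in> {1..a} \<Longrightarrow> q \<in> {1..a} \<Longrightarrow> arr Q (\<alpha> p) (arrow_path q) = (if p = q then 1 else 0)"
  using inj_on_eq_iff[OF arrow_inj, of q p] by (auto simp: arr_arrow pvec_def)

lemma mat_der_arr: "p \<in> {1..a} \<Longrightarrow> q \<in> {1..a} \<Longrightarrow> L T (arr Q (\<alpha> p)) (arrow_path q) = T p q"
  by (simp add: mat_der_arrow_path arr_arrow_path if_distrib[of "\<lambda>x. _ * x"] eq_commute[of p] cong: if_cong)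

lemma pcomm_arr: "p \<in> {1..a} \<Longrightarrow> q \<in> {1..a} \<Longrightarrow>
   pcomm Q x (arr Q (\<alpha> p)) (arrow_path q) = (x (z0, []) - x (om, [])) * (if p = q then 1 else 0)"
  by (simp add: pcomm_arrow_path arr_arrow_path) (simp add: arr_arrow pvec_def algebra_simps)

text \<open>The invariant of the Lie algebra generated by the \<open>w\<^sub>p\<^sub>q\<close> and \<open>x\<^sub>j\<close>: modulo \<open>I\<close>, each of its
  elements is an inner derivation plus a derivation acting on the arrows \<open>\<alpha>\<close> by a traceless matrix.\<close>

definition der_rep :: "('v, 'e) dmap \<Rightarrow> ('v, 'e) pelem \<Rightarrow> (nat \<Rightarrow> nat \<Rightarrow> complex) \<Rightarrow> bool" where
  "der_rep D x T \<longleftrightarrow> inner_elem x \<and> mat_trace a T = 0 \<and> (\<forall>f\<in>cq Q. modI (D f) (padd (pcomm Q x f) (L T f)))"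

definition has_rep :: "('v, 'e) dmap \<Rightarrow> bool" where
  "has_rep D \<longleftrightarrow> is_der Q I D \<and> (\<exists>x T. der_rep D x T)"

lemma der_rep_dadd:
  assumes "der_rep D1 x1 T1" "der_rep D2 x2 T2"
  shows "der_rep (dadd D1 D2) (padd x1 x2) (\<lambda>p q. T1 p q + T2 p q)"
  unfolding der_rep_def
proof (intro conjI ballI)
  show "inner_elem (padd x1 x2)" "mat_trace a (\<lambda>p q. T1 p q + T2 p q) = 0"
    using assms by (auto simp: der_rep_def inner_elem_padd mat_trace_add)
  fix f assume "f \<in> cq Q"
  then have "modI (padd (D1 f) (D2 f)) (padd (padd (pcomm Q x1 f) (L T1 f)) (padd (pcomm Q x2 f) (L T2 f)))"
    using assms unfolding der_rep_def by (blast intro: modI_padd)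
  moreover have "padd (pcomm Q (padd x1 x2) f) (L (\<lambda>p q. T1 p q + T2 p q) f)
      = padd (padd (pcomm Q x1 f) (L T1 f)) (padd (pcomm Q x2 f) (L T2 f))"
    unfolding pcomm_padd_left mat_der_mat_add by (rule ext) (simp add: padd_def algebra_simps)
  ultimately show "modI (dadd D1 D2 f) (padd (pcomm Q (padd x1 x2) f) (L (\<lambda>p q. T1 p q + T2 p q) f))"
    by (simp add: dadd_def)
qed

lemma der_rep_dsmult:
  assumes "der_rep D x T"
  shows "der_rep (dsmult c D) (psmult c x) (\<lambda>p q. c * T p q)"
  unfolding der_rep_def
proof (intro conjI ballI)
  show "inner_elem (psmult c x)" "mat_trace a (\<lambda>p q. c * T p q) = 0"
    using assms by (auto simp: der_rep_def inner_elem_psmult mat_trace_smult)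
  fix f assume "f \<in> cq Q"
  then have "modI (psmult c (D f)) (psmult c (padd (pcomm Q x f) (L T f)))"
    using assms unfolding der_rep_def by (blast intro: modI_psmult)
  moreover have "padd (pcomm Q (psmult c x) f) (L (\<lambda>p q. c * T p q) f) = psmult c (padd (pcomm Q x f) (L T f))"
    unfolding pcomm_psmult_left mat_der_mat_smult by (rule ext) (simp add: padd_def psmult_def algebra_simps)
  ultimately show "modI (dsmult c D f) (padd (pcomm Q (psmult c x) f) (L (\<lambda>p q. c * T p q) f))"
    by (simp add: dsmult_def)
qed

lemma der_rep_inner: "is_inner Q I D \<Longrightarrow> \<exists>x. der_rep D x (\<lambda>p q. 0)"
proof -
  have "padd y pzero = y" for y :: "('v, 'e) pelem" by (rule ext) (simp add: padd_def pzero_def)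
  then show "is_inner Q I D \<Longrightarrow> \<exists>x. der_rep D x (\<lambda>p q. 0)"
    unfolding is_inner_iff der_rep_def by (simp add: mat_der_mat_zero mat_trace_def)
qed

lemma inner_mat_der_bracket:
  assumes "inner_elem x1" "inner_elem x2"
  shows "psub (padd (pcomm Q x1 (padd (pcomm Q x2 f) (L T2 f))) (L T1 (padd (pcomm Q x2 f) (L T2 f))))
              (padd (pcomm Q x2 (padd (pcomm Q x1 f) (L T1 f))) (L T2 (padd (pcomm Q x1 f) (L T1 f))))
       = padd (pcomm Q (pcomm Q x1 x2) f) (L (\<lambda>p q. mat_mult a T2 T1 p q - mat_mult a T1 T2 p q) f)"
  unfolding pcomm_padd_right mat_der_padd pcomm_mat_der mat_der_pcomm[OF assms(1)] mat_der_pcomm[OF assms(2)]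
    mat_der_comp pcomm_pcomm[OF wf] mat_der_mat_diff
  by (rule ext) (simp add: psub_def padd_def psmult_def algebra_simps)

lemma der_rep_dbr:
  assumes d1: "is_der Q I D1" and d2: "is_der Q I D2" and r1: "der_rep D1 x1 T1" and r2: "der_rep D2 x2 T2"
  shows "der_rep (dbr D1 D2) (pcomm Q x1 x2) (\<lambda>p q. mat_mult a T2 T1 p q - mat_mult a T1 T2 p q)"
  unfolding der_rep_def
proof (intro conjI ballI)
  have x1: "inner_elem x1" and x2: "inner_elem x2" using r1 r2 by (auto simp: der_rep_def)
  then show "inner_elem (pcomm Q x1 x2)" by (rule inner_elem_pcomm)
  show "mat_trace a (\<lambda>p q. mat_mult a T2 T1 p q - mat_mult a T1 T2 p q) = 0" by (rule mat_trace_commutator)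
  fix f assume f: "f \<in> cq Q"
  define k1 where "k1 = padd (pcomm Q x1 f) (L T1 f)"
  define k2 where "k2 = padd (pcomm Q x2 f) (L T2 f)"
  have k1: "k1 \<in> cq Q" and k2: "k2 \<in> cq Q"
    using x1 x2 f by (simp_all add: k1_def k2_def inner_elem_def cq_padd cq_pcomm cq_mat_der)
  have "modI (D1 (D2 f)) (D1 k2)"
    using der_wd[OF d1 der_cq[OF d2 f] k2] r2 f unfolding der_rep_def k2_def by blast
  moreover have "modI (D1 k2) (padd (pcomm Q x1 k2) (L T1 k2))" using r1 k2 unfolding der_rep_def by blast
  ultimately have D12: "modI (D1 (D2 f)) (padd (pcomm Q x1 k2) (L T1 k2))" by (rule modI_trans)
  have "modI (D2 (D1 f)) (D2 k1)"
    using der_wd[OF d2 der_cq[OF d1 f] k1] r1 f unfolding der_rep_def k1_def by blast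
  moreover have "modI (D2 k1) (padd (pcomm Q x2 k1) (L T2 k1))" using r2 k1 unfolding der_rep_def by blast
  ultimately have D21: "modI (D2 (D1 f)) (padd (pcomm Q x2 k1) (L T2 k1))" by (rule modI_trans)
  show "modI (dbr D1 D2 f)
      (padd (pcomm Q (pcomm Q x1 x2) f) (L (\<lambda>p q. mat_mult a T2 T1 p q - mat_mult a T1 T2 p q) f))"
    using modI_psub[OF D12 D21] unfolding dbr_def k1_def k2_def inner_mat_der_bracket[OF x1 x2] .
qed

lemma has_rep_lie_gen:
  assumes "D \<in> lie_gen Q I G" and "\<And>D. D \<in> G \<Longrightarrow> has_rep D"
  shows "has_rep D"
  using assms(1)
proof induction
  case (gen D) then show ?case using assms(2) by blast
next
  case (inner D) then show ?case using der_rep_inner unfolding has_rep_def by blast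
next
  case (add D1 D2) then show ?case using der_rep_dadd is_der_dadd by (meson has_rep_def)
next
  case (smult D c) then show ?case using der_rep_dsmult is_der_dsmult by (meson has_rep_def)
next
  case (br D1 D2) then show ?case using der_rep_dbr is_der_dbr by (meson has_rep_def)
qed

definition arrow_matrix :: "('v, 'e) dmap \<Rightarrow> nat \<Rightarrow> nat \<Rightarrow> complex" where
  "arrow_matrix D = (\<lambda>p q. D (arr Q (\<alpha> p)) (arrow_path q))"

lemma arrow_matrix_dadd: "arrow_matrix (dadd D1 D2) p q = arrow_matrix D1 p q + arrow_matrix D2 p q"
  by (simp add: arrow_matrix_def dadd_def padd_def)

lemma arrow_matrix_dsmult: "arrow_matrix (dsmult c D) p q = c * arrow_matrix D p q"
  by (simp add: arrow_matrix_def dsmult_def psmult_def)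

lemma arrow_matrix_mat_der:
  "(\<And>f. f \<in> cq Q \<Longrightarrow> D f = L T f) \<Longrightarrow> p \<in> {1..a} \<Longrightarrow> q \<in> {1..a} \<Longrightarrow> arrow_matrix D p q = T p q"
  using cq_arr_arrow by (simp add: arrow_matrix_def mat_der_arr)

lemma der_rep_arrow_matrix:
  assumes "der_rep D x T" "p \<in> {1..a}" "q \<in> {1..a}"
  shows "arrow_matrix D p q = (x (z0, []) - x (om, [])) * (if p = q then 1 else 0) + T p q"
proof -
  have "modI (D (arr Q (\<alpha> p))) (padd (pcomm Q x (arr Q (\<alpha> p))) (L T (arr Q (\<alpha> p))))"
    using assms cq_arr_arrow unfolding der_rep_def by blast
  then have "psub (D (arr Q (\<alpha> p))) (padd (pcomm Q x (arr Q (\<alpha> p))) (L T (arr Q (\<alpha> p)))) (arrow_path q) = 0"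
    by (rule ideal_arrow_path)
  then show ?thesis using assms(2,3) by (simp add: arrow_matrix_def psub_def padd_def pcomm_arr mat_der_arr)
qed

lemma der_eq_arrow_matrix:
  assumes "der_eq Q I D1 D2"
  obtains s where "\<And>p q. p \<in> {1..a} \<Longrightarrow> q \<in> {1..a} \<Longrightarrow>
    arrow_matrix D1 p q - arrow_matrix D2 p q = s * (if p = q then 1 else 0)"
proof -
  obtain x where x: "\<forall>f\<in>cq Q. modI (dsub D1 D2 f) (pcomm Q x f)"
    using assms unfolding der_eq_def is_inner_def by blast
  have "arrow_matrix D1 p q - arrow_matrix D2 p q = (x (z0, []) - x (om, [])) * (if p = q then 1 else 0)"
    if "p \<in> {1..a}" "q \<in> {1..a}" for p q
  proof -
    have "psub (dsub D1 D2 (arr Q (\<alpha> p))) (pcomm Q x (arr Q (\<alpha> p))) (arrow_path q) = 0"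
      using x cq_arr_arrow[OF that(1)] ideal_arrow_path by blast
    then show ?thesis using that by (simp add: arrow_matrix_def psub_def dsub_def pcomm_arr)
  qed
  then show ?thesis using that by blast
qed

text \<open>In the converse direction the trace condition forces the traceless parts to agree.\<close>

lemma der_eq_if_arrow_matrix:
  assumes h1: "has_rep D1" and h2: "has_rep D2"
    and s: "\<And>p q. p \<in> {1..a} \<Longrightarrow> q \<in> {1..a} \<Longrightarrow>
      arrow_matrix D1 p q - arrow_matrix D2 p q = s * (if p = q then 1 else 0)"
  shows "der_eq Q I D1 D2"
proof -
  obtain x1 T1 where r1: "der_rep D1 x1 T1" using h1 by (auto simp: has_rep_def)
  obtain x2 T2 where r2: "der_rep D2 x2 T2" using h2 by (auto simp: has_rep_def)
  define t where "t = s - (x1 (z0, []) - x1 (om, [])) + (x2 (z0, []) - x2 (om, []))"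
  have td: "T1 p q - T2 p q = t * (if p = q then 1 else 0)" if "p \<in> {1..a}" "q \<in> {1..a}" for p q
    using s[OF that] der_rep_arrow_matrix[OF r1 that] der_rep_arrow_matrix[OF r2 that]
    by (auto simp: t_def algebra_simps)
  have eqT: "T1 p q = T2 p q" if p: "p \<in> {1..a}" and q: "q \<in> {1..a}" for p q
  proof -
    have "mat_trace a T1 - mat_trace a T2 = (\<Sum>p\<in>{1..a}. T1 p p - T2 p p)"
      by (simp add: mat_trace_def sum_subtractf)
    also have "\<dots> = (\<Sum>p\<in>{1..a}. t)" using td by (intro sum.cong) auto
    finally have "of_nat a * t = 0" using r1 r2 by (simp add: der_rep_def)
    then have "t = 0" using p by auto
    then show ?thesis using td[OF p q] by simp
  qed
  have x: "inner_elem (psub x1 x2)" using r1 r2 by (simp add: der_rep_def inner_elem_psub)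
  show ?thesis unfolding der_eq_def is_inner_iff
  proof (intro exI conjI ballI)
    fix f assume "f \<in> cq Q"
    then have "modI (psub (D1 f) (D2 f)) (psub (padd (pcomm Q x1 f) (L T1 f)) (padd (pcomm Q x2 f) (L T2 f)))"
      using r1 r2 unfolding der_rep_def by (blast intro: modI_psub)
    moreover have "L T1 f = L T2 f" by (rule mat_der_mat_cong) (use eqT in auto)
    ultimately show "modI (dsub D1 D2 f) (pcomm Q (psub x1 x2) f)"
      by (simp add: dsub_def pcomm_psub_left) (simp add: psub_def padd_def)
  qed (rule x)
qed

lemma arrder_arrow_summand:
  assumes q': "qpath Q q'" and p: "p \<in> {1..a}" and q: "q \<in> {1..a}"
  shows "(\<Sum>i<length (snd q'). pmult Q (pmult Q (pvec (fst q', take i (snd q')))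
      (if snd q' ! i = \<alpha> p then arr Q (\<alpha> q) else pzero)) (pvec (tgt Q (snd q' ! i), drop (Suc i) (snd q'))) P)
    = (if q' = arrow_path p then arr Q (\<alpha> q) P else 0)"
proof (cases "q' = arrow_path p")
  case True
  have "pmult Q (pmult Q (idem z0) (arr Q (\<alpha> q))) (idem om) P = arr Q (\<alpha> q) P"
    by (cases "P = arrow_path q")
      (simp_all add: arr_arrow[OF q] pvec_def pmult_idem_left pmult_idem_right qpath_arrow_path[OF q] pend_def arrow[OF q])
  then show ?thesis using True arrow[OF p] by (simp add: idem_def)
next
  case False
  have "snd q' ! i \<noteq> \<alpha> p" if "i < length (snd q')" for i
    using qpath_through_arrow[of "fst q'" "snd q'" p] q' p False that by (metis nth_mem prod.collapse)
  then show ?thesis using False by (simp add: pmult_pzero_left pmult_pzero_right) (simp add: pzero_def)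
qed

lemma arrder_arrow:
  assumes f: "f \<in> cq Q" and p: "p \<in> {1..a}" and q: "q \<in> {1..a}"
  shows "arrder Q (\<alpha> p) (arr Q (\<alpha> q)) f = psmult (f (arrow_path p)) (arr Q (\<alpha> q))"
proof
  fix P :: "('v, 'e) path"
  have "arrder Q (\<alpha> p) (arr Q (\<alpha> q)) f P
      = (\<Sum>q'\<in>{q'. f q' \<noteq> 0}. if q' = arrow_path p then f q' * arr Q (\<alpha> q) P else 0)"
    unfolding arrder_def free_der_def
  proof (rule sum.cong[OF refl])
    fix q' assume "q' \<in> {q'. f q' \<noteq> 0}"
    then have "qpath Q q'" using f unfolding cq_def by blast
    then show "f q' * (\<Sum>i<length (snd q'). pmult Q (pmult Q (pvec (fst q', take i (snd q')))
        ((\<lambda>b. if b = \<alpha> p then arr Q (\<alpha> q) else pzero) (snd q' ! i)))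
        (pvec (tgt Q (snd q' ! i), drop (Suc i) (snd q'))) P)
      = (if q' = arrow_path p then f q' * arr Q (\<alpha> q) P else 0)"
      by (simp only: arrder_arrow_summand[OF _ p q]) simp
  qed
  also have "\<dots> = f (arrow_path p) * arr Q (\<alpha> q) P"
    using f by (simp add: cq_def)
  finally show "arrder Q (\<alpha> p) (arr Q (\<alpha> q)) f P = psmult (f (arrow_path p)) (arr Q (\<alpha> q)) P"
    by (simp add: psmult_def)
qed

lemma arrder_mat_unit:
  assumes f: "f \<in> cq Q" and p: "p \<in> {1..a}" and q: "q \<in> {1..a}"
  shows "arrder Q (\<alpha> p) (arr Q (\<alpha> q)) f = L (mat_unit p q) f"
  unfolding arrder_arrow[OF assms]
proof (rule on_arrows_eqI[OF on_arrows_psmult[OF on_arrows_arr[OF q]] on_arrows_mat_der])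
  fix r assume "r \<in> {1..a}"
  then show "psmult (f (arrow_path p)) (arr Q (\<alpha> q)) (arrow_path r) = L (mat_unit p q) f (arrow_path r)"
    using p q by (simp add: psmult_def arr_arrow_path mat_der_arrow_path mat_unit_def if_distrib[of "\<lambda>x. x * _"]
        eq_commute[of q] cong: if_cong)
qed

lemma has_rep_mat_der:
  assumes "\<And>f. f \<in> cq Q \<Longrightarrow> D f = L T f" and "mat_trace a T = 0"
  shows "has_rep D"
  unfolding has_rep_def
proof (intro conjI exI)
  show "is_der Q I D" using is_der_cong[OF assms(1) is_der_mat_der] .
  have "padd pzero y = y" for y :: "('v, 'e) pelem" by (rule ext) (simp add: padd_def pzero_def)
  then show "der_rep D pzero T"
    using assms by (simp add: der_rep_def inner_elem_pzero pcomm_pzero_left modI_refl)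
qed

lemma w_der_mat_unit: "p \<in> {1..a} \<Longrightarrow> q \<in> {1..a} \<Longrightarrow> f \<in> cq Q \<Longrightarrow> w_der Q \<alpha> p q f = L (mat_unit p q) f"
  by (simp add: w_der_def arrder_mat_unit)

lemma x_der_mat_unit:
  "j \<in> {1..a} \<Longrightarrow> 1 \<le> a \<Longrightarrow> f \<in> cq Q \<Longrightarrow>
    x_der Q \<alpha> j f = L (\<lambda>p q. mat_unit j j p q - mat_unit 1 1 p q) f"
  by (simp add: x_der_def dsub_def arrder_mat_unit mat_der_mat_diff)

definition generators :: "('v, 'e) dmap set" where
  "generators = {w_der Q \<alpha> p q | p q. p \<noteq> q \<and> p \<in> {1..a} \<and> q \<in> {1..a}} \<union> {x_der Q \<alpha> j | j. 2 \<le> j \<and> j \<le> a}"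

lemma has_rep_generated: "D \<in> lie_gen Q I generators \<Longrightarrow> has_rep D"
proof (erule has_rep_lie_gen)
  fix D assume "D \<in> generators"
  then consider p q where "D = w_der Q \<alpha> p q" "p \<noteq> q" "p \<in> {1..a}" "q \<in> {1..a}"
    | j where "D = x_der Q \<alpha> j" "2 \<le> j" "j \<le> a"
    unfolding generators_def by blast
  then show "has_rep D"
  proof cases
    case 1 then show ?thesis by (intro has_rep_mat_der[of _ "mat_unit p q"]) (simp_all add: w_der_mat_unit mat_trace_unit)
  next
    case 2 then show ?thesis
      by (intro has_rep_mat_der[of _ "\<lambda>p q. mat_unit j j p q - mat_unit 1 1 p q"])
        (simp_all add: x_der_mat_unit mat_trace_diff mat_trace_unit)
  qed
qed

definition realised :: "(nat \<Rightarrow> nat \<Rightarrow> complex) \<Rightarrow> bool" where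
  "realised M \<longleftrightarrow> (\<exists>D\<in>lie_gen Q I generators. \<forall>p\<in>{1..a}. \<forall>q\<in>{1..a}. arrow_matrix D p q = M p q)"

lemma realised_zero: "realised (\<lambda>p q. 0)"
  unfolding realised_def using pzero_der_in_lie_gen by (force simp: arrow_matrix_def pzero_def)

lemma realised_add: "realised A \<Longrightarrow> realised B \<Longrightarrow> realised (\<lambda>p q. A p q + B p q)"
  unfolding realised_def by (metis arrow_matrix_dadd lie_gen.add)

lemma realised_smult: "realised A \<Longrightarrow> realised (\<lambda>p q. c * A p q)"
  unfolding realised_def by (metis arrow_matrix_dsmult lie_gen.smult)

lemma realised_cong:
  "realised A \<Longrightarrow> (\<And>p q. p \<in> {1..a} \<Longrightarrow> q \<in> {1..a} \<Longrightarrow> A p q = B p q) \<Longrightarrow> realised B"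
  unfolding realised_def by metis

lemma realised_sum: "finite X \<Longrightarrow> (\<And>i. i \<in> X \<Longrightarrow> realised (F i)) \<Longrightarrow> realised (\<lambda>p q. \<Sum>i\<in>X. F i p q)"
proof (induction X rule: finite_induct)
  case empty then show ?case using realised_zero by simp
next
  case (insert x X)
  then have "realised (\<lambda>p q. F x p q + (\<Sum>i\<in>X. F i p q))" by (intro realised_add) auto
  then show ?case using insert by simp
qed

lemma realised_mat_unit: "p \<in> {1..a} \<Longrightarrow> q \<in> {1..a} \<Longrightarrow> p \<noteq> q \<Longrightarrow> realised (mat_unit p q)"
  unfolding realised_def
  by (rule bexI[of _ "w_der Q \<alpha> p q"])
    (auto simp: generators_def w_der_mat_unit intro: arrow_matrix_mat_der lie_gen.gen)

lemma realised_mat_unit_diag: "2 \<le> j \<Longrightarrow> j \<le> a \<Longrightarrow> realised (\<lambda>p q. mat_unit j j p q - mat_unit 1 1 p q)"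
  unfolding realised_def
  by (rule bexI[of _ "x_der Q \<alpha> j"])
    (auto simp: generators_def x_der_mat_unit intro!: arrow_matrix_mat_der lie_gen.gen)

lemma realised_traceless:
  assumes "mat_trace a T = 0"
  shows "realised T"
proof -
  define OD where "OD = {(i, j). i \<in> {1..a} \<and> j \<in> {1..a} \<and> i \<noteq> j}"
  have "finite OD" unfolding OD_def by (rule finite_subset[of _ "{1..a} \<times> {1..a}"]) auto
  then have "realised (\<lambda>p q. \<Sum>(i, j)\<in>OD. T i j * mat_unit i j p q)"
    by (rule realised_cong[OF realised_sum, of _ "\<lambda>x p q. T (fst x) (snd x) * mat_unit (fst x) (snd x) p q"])
      (auto simp: OD_def case_prod_beta intro!: realised_smult realised_mat_unit)
  moreover have "realised (\<lambda>p q. \<Sum>j\<in>{2..a}. T j j * (mat_unit j j p q - mat_unit 1 1 p q))"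
  proof (rule realised_sum)
    fix j assume "j \<in> {2..a}"
    then show "realised (\<lambda>p q. T j j * (mat_unit j j p q - mat_unit 1 1 p q))"
      by (intro realised_smult realised_mat_unit_diag) auto
  qed simp
  ultimately show ?thesis
    by (rule realised_cong[OF realised_add]) (simp only: traceless_mat_expansion[OF assms] OD_def)
qed

lemma arrow_matrix_dbr:
  assumes h1: "has_rep D1" and h2: "has_rep D2"
  obtains s where "\<And>p q. p \<in> {1..a} \<Longrightarrow> q \<in> {1..a} \<Longrightarrow>
     arrow_matrix (dbr D1 D2) p q
       - (mat_mult a (arrow_matrix D2) (arrow_matrix D1) p q - mat_mult a (arrow_matrix D1) (arrow_matrix D2) p q)
     = s * (if p = q then 1 else 0)"
proof -
  obtain x1 T1 where r1: "der_rep D1 x1 T1" and d1: "is_der Q I D1" using h1 by (auto simp: has_rep_def)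
  obtain x2 T2 where r2: "der_rep D2 x2 T2" and d2: "is_der Q I D2" using h2 by (auto simp: has_rep_def)
  note rb = der_rep_dbr[OF d1 d2 r1 r2]
  define c1 where "c1 = x1 (z0, []) - x1 (om, [])"
  define c2 where "c2 = x2 (z0, []) - x2 (om, [])"
  have M1: "\<And>p q. p \<in> {1..a} \<Longrightarrow> q \<in> {1..a} \<Longrightarrow> arrow_matrix D1 p q = c1 * (if p = q then 1 else 0) + T1 p q"
    using der_rep_arrow_matrix[OF r1] c1_def by blast
  have M2: "\<And>p q. p \<in> {1..a} \<Longrightarrow> q \<in> {1..a} \<Longrightarrow> arrow_matrix D2 p q = c2 * (if p = q then 1 else 0) + T2 p q"
    using der_rep_arrow_matrix[OF r2] c2_def by blast
  show ?thesis
  proof (rule that)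
    fix p q assume p: "p \<in> {1..a}" and q: "q \<in> {1..a}"
    show "arrow_matrix (dbr D1 D2) p q
       - (mat_mult a (arrow_matrix D2) (arrow_matrix D1) p q - mat_mult a (arrow_matrix D1) (arrow_matrix D2) p q)
     = (pcomm Q x1 x2 (z0, []) - pcomm Q x1 x2 (om, [])) * (if p = q then 1 else 0)"
      using der_rep_arrow_matrix[OF rb p q] mat_mult_scalar_shift[OF p q M2 M1] mat_mult_scalar_shift[OF p q M1 M2]
      by (simp add: algebra_simps)
  qed
qed

end

section \<open>The Kronecker quiver\<close>

lemma ideal_gen_empty: "ideal_gen Q {} = {pzero}"
proof
  show "ideal_gen Q {} \<subseteq> {pzero}"
  proof
    fix x assume "x \<in> ideal_gen Q {}"
    then show "x \<in> {pzero}" by induction (auto simp: padd_def psmult_def pzero_def)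
  qed
qed (auto intro: ideal_gen.zero)

interpretation kronecker: parallel_arrows "kronecker a" "{pzero}" 0 1 a "\<lambda>p. p" for a
proof unfold_locales
  show "wf_quiver (kronecker a)" by (simp add: wf_quiver_def kronecker_def)
  show "pmult (kronecker a) h x \<in> {pzero} \<and> pmult (kronecker a) x h \<in> {pzero}" if "x \<in> {pzero}" for x h
    using that by (simp add: pmult_pzero_left pmult_pzero_right)
qed (auto simp: kronecker_def padd_def psmult_def pzero_def pmult_pzero_left pmult_pzero_right)

lemma kronecker_qpath:
  assumes "qpath (kronecker a) (v, xs)"
  shows "(xs = [] \<and> v \<in> {0, 1}) \<or> (\<exists>r\<in>{1..a}. v = 0 \<and> xs = [r])"
proof (cases xs)
  case Nil then show ?thesis using assms by (auto simp: qpath_def kronecker_def)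
next
  case (Cons r ys)
  have "ys = []"
  proof (rule ccontr)
    assume "ys \<noteq> []"
    then have "Suc 0 < length xs" using Cons by simp
    then show False using assms by (simp add: qpath_def kronecker_def)
  qed
  then show ?thesis using assms Cons by (auto simp: qpath_def kronecker_def)
qed

text \<open>Over the Kronecker quiver the Euler derivation \<open>[e\<^sub>0, -]\<close> is the identity on the arrows,
  so scalar matrices give inner derivations.\<close>

lemma kronecker_pcomm_idem_source:
  assumes f: "f \<in> cq (kronecker a)"
  shows "pcomm (kronecker a) (idem 0) f = mat_der 0 a (\<lambda>p. p) (\<lambda>p q. if p = q then 1 else 0) f"
proof
  fix P :: "(nat, nat) path"
  obtain v xs where P: "P = (v, xs)" by (cases P)
  let ?Id = "\<lambda>p q. if p = q then 1 else 0 :: complex"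
  show "pcomm (kronecker a) (idem 0) f P = mat_der 0 a (\<lambda>p. p) ?Id f P"
  proof (cases "\<exists>r\<in>{1..a}. v = 0 \<and> xs = [r]")
    case True
    then obtain r where r: "r \<in> {1..a}" "v = 0" "xs = [r]" by blast
    have "mat_der 0 a (\<lambda>p. p) ?Id f P = (\<Sum>p\<in>{1..a}. if p = r then f (0, [p]) else 0)"
      using kronecker.mat_der_arrow_path[OF r(1)] P r by (simp add: if_distrib[of "\<lambda>x. x * _"] cong: if_cong)
    then show ?thesis
      using r P kronecker.qpath_arrow_path[OF r(1)]
      by (simp add: pcomm_def psub_def pmult_idem_left pmult_idem_right pend_def kronecker_def)
  next
    case False
    then have "mat_der 0 a (\<lambda>p. p) ?Id f P = 0"
      using kronecker.on_arrows_mat_der[of a ?Id f] P unfolding kronecker.on_arrows_def by blast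
    moreover have "qpath (kronecker a) P \<Longrightarrow> pend (kronecker a) P = fst P"
      using kronecker_qpath[of a v xs] False P by (auto simp: pend_def)
    ultimately show ?thesis by (auto simp: pcomm_def psub_def pmult_idem_left pmult_idem_right)
  qed
qed

lemma kronecker_der_eqI:
  assumes d1: "\<And>f. f \<in> cq (kronecker a) \<Longrightarrow> D1 f = mat_der 0 a (\<lambda>p. p) M1 f"
    and d2: "\<And>f. f \<in> cq (kronecker a) \<Longrightarrow> D2 f = mat_der 0 a (\<lambda>p. p) M2 f"
    and s: "\<And>p q. p \<in> {1..a} \<Longrightarrow> q \<in> {1..a} \<Longrightarrow> M1 p q - M2 p q = s * (if p = q then 1 else 0)"
  shows "der_eq (kronecker a) {pzero} D1 D2"
  unfolding der_eq_def kronecker.is_inner_iff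
proof (intro exI conjI ballI)
  have "pcomm (kronecker a) (idem 0) (idem v) = pzero" for v :: nat
    by (rule ext, simp only: pcomm_def psub_def pmult_idem_left pmult_idem_right)
      (auto simp: idem_def pvec_def pend_def pzero_def)
  moreover have "idem 0 \<in> cq (kronecker a)" by (rule cq_idem) (simp add: kronecker_def)
  ultimately show "kronecker.inner_elem a (psmult s (idem 0))"
    by (simp add: kronecker.inner_elem_def cq_psmult pcomm_psmult_left) (simp add: psmult_def pzero_def)
  fix f assume f: "f \<in> cq (kronecker a)"
  have "dsub D1 D2 f = mat_der 0 a (\<lambda>p. p) (\<lambda>p q. M1 p q - M2 p q) f"
    by (simp add: dsub_def d1 d2 f kronecker.mat_der_mat_diff)
  also have "\<dots> = mat_der 0 a (\<lambda>p. p) (\<lambda>p q. s * (if p = q then 1 else 0)) f"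
    by (rule kronecker.mat_der_mat_cong) (use s in auto)
  also have "\<dots> = pcomm (kronecker a) (psmult s (idem 0)) f"
    by (simp add: kronecker.mat_der_mat_smult pcomm_psmult_left kronecker_pcomm_idem_source[OF f])
  finally show "kronecker.modI (dsub D1 D2 f) (pcomm (kronecker a) (psmult s (idem 0)) f)"
    by (simp add: psub_self)
qed

lemma kronecker_tgt: "tgt (kronecker a) g = 1"
  by (simp add: kronecker_def)

lemma cq_kronecker_idem: "v \<in> {0, 1} \<Longrightarrow> idem v \<in> cq (kronecker a)"
  by (rule cq_idem) (auto simp: kronecker_def)

definition kronecker_vertex_part :: "(nat, nat) pelem \<Rightarrow> (nat, nat) pelem" where
  "kronecker_vertex_part f = padd (psmult (f (0, [])) (idem 0)) (psmult (f (1, [])) (idem 1))"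

lemma cq_kronecker_vertex_part: "kronecker_vertex_part f \<in> cq (kronecker a)"
  unfolding kronecker_vertex_part_def by (intro cq_padd cq_psmult cq_kronecker_idem) auto

lemma on_arrows_sub_vertex_part:
  assumes f: "f \<in> cq (kronecker a)"
  shows "kronecker.on_arrows a (psub f (kronecker_vertex_part f))"
  unfolding kronecker.on_arrows_def
proof (intro allI impI)
  let ?g = "psub f (kronecker_vertex_part f)"
  fix P assume nz: "?g P \<noteq> 0"
  obtain v xs where P: "P = (v, xs)" by (cases P)
  have "?g (v, []) = 0"
  proof (cases "v \<in> {0, 1}")
    case True
    then show ?thesis by (auto simp: kronecker_vertex_part_def psub_def padd_def psmult_def idem_def pvec_def)
  next
    case False
    then have "f (v, []) = 0" using f unfolding cq_def by (auto simp: qpath_def kronecker_def)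
    then show ?thesis
      using False by (simp add: kronecker_vertex_part_def psub_def padd_def psmult_def idem_def pvec_def)
  qed
  then have "xs \<noteq> []" using nz P by auto
  then have "f P \<noteq> 0"
    using nz by (simp add: kronecker_vertex_part_def P psub_def padd_def psmult_def idem_def pvec_def)
  then have "qpath (kronecker a) (v, xs)" using f P unfolding cq_def by blast
  with \<open>xs \<noteq> []\<close> show "\<exists>r\<in>{1..a}. P = (0, [r])" using kronecker_qpath[of a v xs] P by auto
qed

context
  fixes a :: nat and E :: "(nat, nat) dmap"
  assumes der: "is_der (kronecker a) {pzero} E"
begin

lemma kronecker_der_lin:
  "f \<in> cq (kronecker a) \<Longrightarrow> g \<in> cq (kronecker a) \<Longrightarrow> E (padd (psmult c f) g) = padd (psmult c (E f)) (E g)"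
  using der_lin[OF der] by (simp add: psub_eq_pzero_iff)

lemma kronecker_der_leibniz:
  "f \<in> cq (kronecker a) \<Longrightarrow> g \<in> cq (kronecker a) \<Longrightarrow> E (pmult (kronecker a) f g) = padd (pmult (kronecker a) (E f) g) (pmult (kronecker a) f (E g))"
  using der_leibniz[OF der] by (simp add: psub_eq_pzero_iff)

lemma kronecker_der_padd: "f \<in> cq (kronecker a) \<Longrightarrow> g \<in> cq (kronecker a) \<Longrightarrow> E (padd f g) = padd (E f) (E g)"
  using kronecker_der_lin[of f g 1] by (simp add: psmult_def)

lemma kronecker_der_idem: "v \<in> {0, 1} \<Longrightarrow> E (idem v) = pzero"
  using der_idem[OF der] by (simp add: kronecker_def)

lemma kronecker_der_pzero: "E pzero = pzero"
  using kronecker.der_pzero[OF der] by simp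

text \<open>\<open>E\<close> maps an arrow into \<open>e\<^sub>0 A e\<^sub>1\<close>, which is spanned by the arrows.\<close>

lemma kronecker_der_arr:
  assumes p: "p \<in> {1..a}"
  shows "E (arr (kronecker a) p) = mat_der 0 a (\<lambda>p. p) (kronecker.arrow_matrix a E) (arr (kronecker a) p)"
proof (rule kronecker.on_arrows_eqI)
  let ?K = "kronecker a"
  have ca: "arr ?K p \<in> cq ?K" using kronecker.cq_arr_arrow[OF p] .
  have ar: "arr ?K p = pvec (0, [p])" by (simp add: arr_def kronecker_def)
  have "pmult ?K (idem 0) (arr ?K p) = arr ?K p"
    by (rule ext) (use kronecker.qpath_arrow_path[OF p] in \<open>auto simp: pmult_idem_left ar pvec_def\<close>)
  then have e0: "E (arr ?K p) = pmult ?K (idem 0) (E (arr ?K p))"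
    using kronecker_der_leibniz[OF cq_kronecker_idem ca, of 0] kronecker_der_idem[of 0]
    by (simp add: pmult_pzero_left) (simp add: padd_def pzero_def)
  have "pmult ?K (arr ?K p) (idem 1) = arr ?K p"
    by (rule ext) (use kronecker.qpath_arrow_path[OF p] in \<open>auto simp: pmult_idem_right ar pvec_def pend_def kronecker_tgt\<close>)
  then have e1: "E (arr ?K p) = pmult ?K (E (arr ?K p)) (idem 1)"
    using kronecker_der_leibniz[OF ca cq_kronecker_idem, of 1] kronecker_der_idem[of 1]
    by (simp add: pmult_pzero_right) (simp add: padd_def pzero_def)
  show "kronecker.on_arrows a (E (arr ?K p))"
    unfolding kronecker.on_arrows_def
  proof (intro allI impI)
    fix P assume nz: "E (arr ?K p) P \<noteq> 0"
    obtain v xs where P: "P = (v, xs)" by (cases P)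
    have "qpath ?K P" "fst P = 0" "pend ?K P = 1"
      using nz e0 e1 pmult_idem_left[of ?K 0 "E (arr ?K p)" P] pmult_idem_right[of ?K "E (arr ?K p)" 1 P]
      by (auto split: if_splits)
    then show "\<exists>r\<in>{1..a}. P = (0, [r])" using kronecker_qpath[of a v xs] P by (auto simp: pend_def)
  qed
  show "kronecker.on_arrows a (mat_der 0 a (\<lambda>p. p) (kronecker.arrow_matrix a E) (arr ?K p))"
    by (rule kronecker.on_arrows_mat_der)
  fix r assume "r \<in> {1..a}"
  then show "E (arr ?K p) (0, [r]) = mat_der 0 a (\<lambda>p. p) (kronecker.arrow_matrix a E) (arr ?K p) (0, [r])"
    using kronecker.mat_der_arr[OF p] by (simp add: kronecker.arrow_matrix_def)
qed

lemma kronecker_der_on_arrows_finite: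
  assumes "finite S"
  shows "f \<in> cq (kronecker a) \<Longrightarrow> kronecker.on_arrows a f \<Longrightarrow> {P. f P \<noteq> 0} \<subseteq> S
    \<Longrightarrow> E f = mat_der 0 a (\<lambda>p. p) (kronecker.arrow_matrix a E) f"
  using assms
proof (induction S arbitrary: f rule: finite_induct)
  case empty
  then have "f = pzero" by (auto simp: pzero_def)
  then show ?case by (simp add: kronecker_der_pzero kronecker.mat_der_pzero)
next
  case (insert P S)
  show ?case
  proof (cases "f P = 0")
    case True
    then show ?thesis using insert by blast
  next
    case False
    then obtain r where r: "r \<in> {1..a}" "P = (0, [r])" using insert.prems(2) unfolding kronecker.on_arrows_def by blast
    define f' where "f' = (\<lambda>Q. if Q = P then 0 else f Q)"
    have "f' \<in> cq (kronecker a)"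
      by (rule cq_if_support_covered[OF insert.prems(1) insert.prems(1)]) (simp add: f'_def split: if_splits)
    moreover have "kronecker.on_arrows a f'" "{P. f' P \<noteq> 0} \<subseteq> S"
      using insert.prems unfolding kronecker.on_arrows_def by (auto simp: f'_def)
    ultimately have f': "f' \<in> cq (kronecker a)" "kronecker.on_arrows a f'" "{P. f' P \<noteq> 0} \<subseteq> S" .
    have dec: "f = padd (psmult (f P) (arr (kronecker a) r)) f'"
      by (rule ext) (simp add: f'_def padd_def psmult_def arr_def kronecker_def pvec_def r(2))
    show ?thesis
      by (subst (1 2) dec) (simp add: kronecker_der_lin kronecker.cq_arr_arrow[OF r(1)] f'(1) kronecker.mat_der_lin
          kronecker_der_arr[OF r(1)] insert.IH[OF f'])
  qed
qed

lemma kronecker_der_mat_der: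
  assumes f: "f \<in> cq (kronecker a)"
  shows "E f = mat_der 0 a (\<lambda>p. p) (kronecker.arrow_matrix a E) f"
proof -
  let ?L = "mat_der 0 a (\<lambda>p. p) (kronecker.arrow_matrix a E)"
  define h where "h = kronecker_vertex_part f"
  define g where "g = psub f h"
  have h: "h \<in> cq (kronecker a)" unfolding h_def by (rule cq_kronecker_vertex_part)
  have g: "g \<in> cq (kronecker a)" unfolding g_def using f h by (rule cq_psub)
  have Eg: "E g = ?L g"
    using kronecker_der_on_arrows_finite[of "{P. g P \<noteq> 0}"] g on_arrows_sub_vertex_part[OF f]
    by (simp add: cq_def g_def h_def)
  have "E (psmult c (idem v)) = pzero" if "v \<in> {0, 1}" for c v
    using kronecker_der_lin[OF cq_kronecker_idem[OF that] cq_pzero, of c]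
    by (simp add: kronecker_der_idem[OF that] kronecker_der_pzero) (simp add: padd_def psmult_def pzero_def)
  then have Eh: "E h = pzero"
    unfolding h_def kronecker_vertex_part_def
    by (simp add: kronecker_der_padd cq_psmult cq_kronecker_idem) (simp add: padd_def pzero_def)
  have Lh: "?L h = pzero"
    by (simp add: h_def kronecker_vertex_part_def kronecker.mat_der_padd kronecker.mat_der_psmult
        kronecker.mat_der_idem) (simp add: padd_def psmult_def pzero_def)
  have fd: "f = padd (psmult 1 h) g" by (rule ext) (simp add: g_def padd_def psub_def psmult_def)
  show ?thesis
    by (subst (1 2) fd) (simp add: kronecker_der_lin[OF h g] kronecker.mat_der_lin Eh Lh Eg)
qed

end

section \<open>Toupie algebras\<close>

lemma ideal_gen_pmult:
  assumes w: "wf_quiver Q" and x: "x \<in> ideal_gen Q R" and h: "h \<in> cq Q"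
  shows "pmult Q h x \<in> ideal_gen Q R \<and> pmult Q x h \<in> ideal_gen Q R"
  using x
proof induction
  case zero then show ?case by (simp add: pmult_pzero_left pmult_pzero_right ideal_gen.zero)
next
  case (gen r f g)
  have "pmult Q h (pmult Q f (pmult Q r g)) = pmult Q (pmult Q h f) (pmult Q r g)"
    and "pmult Q (pmult Q f (pmult Q r g)) h = pmult Q f (pmult Q r (pmult Q g h))"
    by (simp_all add: pmult_assoc[OF w])
  then show ?case using gen h by (auto intro!: ideal_gen.gen cq_pmult)
next
  case (add x y) then show ?case by (simp add: pmult_padd_left pmult_padd_right ideal_gen.add)
next
  case (smult x c) then show ?case by (simp add: pmult_psmult_left pmult_psmult_right ideal_gen.smult)
qed

lemma admissible_vanishes_short: "admissible Q I \<Longrightarrow> x \<in> I \<Longrightarrow> length (snd P) \<le> 1 \<Longrightarrow> x P = 0"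
  unfolding admissible_def Rk_def by fastforce

lemma toupie_parallel_arrows:
  assumes t: "is_toupie_algebra Q z0 om I"
    and b: "bij_betw \<alpha> {1..a} {g \<in> arrs Q. src Q g = z0 \<and> tgt Q g = om}"
  shows "parallel_arrows Q I z0 om a \<alpha>"
proof -
  have tp: "is_toupie Q z0 om" and adm: "admissible Q I" using t by (auto simp: is_toupie_algebra_def)
  obtain R where R: "I = ideal_gen Q R" using t by (auto simp: is_toupie_algebra_def)
  have w: "wf_quiver Q" using tp by (simp add: is_toupie_def wf_quiver_def)
  show ?thesis
  proof (unfold_locales)
    show "\<And>x h. x \<in> I \<Longrightarrow> h \<in> cq Q \<Longrightarrow> pmult Q h x \<in> I \<and> pmult Q x h \<in> I"
      using ideal_gen_pmult[OF w] R by blast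
    show "\<And>p. p \<in> {1..a} \<Longrightarrow> \<alpha> p \<in> arrs Q \<and> src Q (\<alpha> p) = z0 \<and> tgt Q (\<alpha> p) = om"
      using b by (auto simp: bij_betw_def)
    show "\<And>x P. x \<in> I \<Longrightarrow> length (snd P) \<le> 1 \<Longrightarrow> x P = 0"
      using admissible_vanishes_short[OF adm] by blast
  qed (use w b tp R in \<open>auto simp: bij_betw_def is_toupie_def intro: ideal_gen.intros\<close>)
qed

context parallel_arrows
begin

definition kronecker_image :: "('v, 'e) dmap \<Rightarrow> (nat, nat) dmap" where
  "kronecker_image D = mat_der 0 a (\<lambda>p. p) (arrow_matrix D)"

lemma is_der_kronecker_image: "is_der (kronecker a) {pzero} (kronecker_image D)"
  by (simp add: kronecker_image_def kronecker.is_der_mat_der)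

lemma der_eq_kronecker_image_iff:
  assumes "D1 \<in> lie_gen Q I generators" "D2 \<in> lie_gen Q I generators"
  shows "der_eq Q I D1 D2 \<longleftrightarrow> der_eq (kronecker a) {pzero} (kronecker_image D1) (kronecker_image D2)"
proof
  assume "der_eq Q I D1 D2"
  then obtain s where s: "\<And>p q. p \<in> {1..a} \<Longrightarrow> q \<in> {1..a} \<Longrightarrow>
      arrow_matrix D1 p q - arrow_matrix D2 p q = s * (if p = q then 1 else 0)"
    by (rule der_eq_arrow_matrix) blast
  show "der_eq (kronecker a) {pzero} (kronecker_image D1) (kronecker_image D2)"
    by (rule kronecker_der_eqI[OF _ _ s]) (simp_all add: kronecker_image_def)
next
  assume "der_eq (kronecker a) {pzero} (kronecker_image D1) (kronecker_image D2)"
  then obtain s where "\<And>p q. p \<in> {1..a} \<Longrightarrow> q \<in> {1..a} \<Longrightarrow>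
      kronecker.arrow_matrix a (kronecker_image D1) p q - kronecker.arrow_matrix a (kronecker_image D2) p q
      = s * (if p = q then 1 else 0)"
    by (rule kronecker.der_eq_arrow_matrix) blast
  then show "der_eq Q I D1 D2"
    using assms by (intro der_eq_if_arrow_matrix has_rep_generated)
      (auto simp: kronecker_image_def kronecker.arrow_matrix_mat_der)
qed

lemma kronecker_image_surj:
  assumes E: "is_der (kronecker a) {pzero} E"
  obtains D where "D \<in> lie_gen Q I generators" "der_eq (kronecker a) {pzero} (kronecker_image D) E"
proof -
  define N where "N = kronecker.arrow_matrix a E"
  define t where "t = mat_trace a N / of_nat a"
  define T where "T = (\<lambda>p q. N p q - t * (if p = q then 1 else 0))"
  have "mat_trace a T = mat_trace a N - of_nat a * t" by (simp add: T_def mat_trace_def sum_subtractf)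
  then have "mat_trace a T = 0" by (cases "a = 0") (simp_all add: t_def mat_trace_def)
  then obtain D where D: "D \<in> lie_gen Q I generators" "\<forall>p\<in>{1..a}. \<forall>q\<in>{1..a}. arrow_matrix D p q = T p q"
    using realised_traceless unfolding realised_def by blast
  have "der_eq (kronecker a) {pzero} (kronecker_image D) E"
  proof (rule kronecker_der_eqI)
    show "kronecker_image D f = mat_der 0 a (\<lambda>p. p) (arrow_matrix D) f" for f
      by (simp add: kronecker_image_def)
    show "E f = mat_der 0 a (\<lambda>p. p) N f" if "f \<in> cq (kronecker a)" for f
      using kronecker_der_mat_der[OF E that] by (simp add: N_def)
    show "arrow_matrix D p q - N p q = - t * (if p = q then 1 else 0)" if "p \<in> {1..a}" "q \<in> {1..a}" for p q
      using D(2) that by (simp add: T_def)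
  qed
  with D(1) show ?thesis by (rule that)
qed

lemma kronecker_image_lin:
  "der_eq (kronecker a) {pzero} (kronecker_image (dadd (dsmult c D1) D2))
     (dadd (dsmult c (kronecker_image D1)) (kronecker_image D2))"
proof -
  have "arrow_matrix (dadd (dsmult c D1) D2) = (\<lambda>p q. c * arrow_matrix D1 p q + arrow_matrix D2 p q)"
    by (intro ext) (simp add: arrow_matrix_dadd arrow_matrix_dsmult)
  then show ?thesis
    by (intro kronecker.der_eqI_pointwise) (simp add: kronecker_image_def kronecker.mat_der_mat_lin dadd_def dsmult_def)
qed

lemma kronecker_image_dbr:
  assumes "D1 \<in> lie_gen Q I generators" "D2 \<in> lie_gen Q I generators"
  shows "der_eq (kronecker a) {pzero} (kronecker_image (dbr D1 D2)) (dbr (kronecker_image D1) (kronecker_image D2))"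
proof -
  obtain s where "\<And>p q. p \<in> {1..a} \<Longrightarrow> q \<in> {1..a} \<Longrightarrow>
     arrow_matrix (dbr D1 D2) p q
       - (mat_mult a (arrow_matrix D2) (arrow_matrix D1) p q - mat_mult a (arrow_matrix D1) (arrow_matrix D2) p q)
     = s * (if p = q then 1 else 0)"
    using arrow_matrix_dbr has_rep_generated assms by metis
  then show ?thesis
    by (rule kronecker_der_eqI[rotated 2])
      (simp_all add: kronecker_image_def dbr_def kronecker.mat_der_comp kronecker.mat_der_mat_diff)
qed

end

theorem proposition6p3:
  fixes Q :: "('v, 'e) quiver" and z0 om :: 'v and I :: "('v, 'e) pelem set"
    and a :: nat and \<alpha> :: "nat \<Rightarrow> 'e"
  assumes "is_toupie_algebra Q z0 om I"
    and "bij_betw \<alpha> {1..a} {g \<in> arrs Q. src Q g = z0 \<and> tgt Q g = om}"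
  shows "lie_iso_HH1 Q I
           (lie_gen Q I ({w_der Q \<alpha> p q | p q. p \<noteq> q \<and> p \<in> {1..a} \<and> q \<in> {1..a}}
                         \<union> {x_der Q \<alpha> j | j. 2 \<le> j \<and> j \<le> a}))
           (kronecker a) (ideal_gen (kronecker a) {})"
proof -
  interpret parallel_arrows Q I z0 om a \<alpha> by (rule toupie_parallel_arrows[OF assms])
  have gen: "lie_gen Q I ({w_der Q \<alpha> p q | p q. p \<noteq> q \<and> p \<in> {1..a} \<and> q \<in> {1..a}}
      \<union> {x_der Q \<alpha> j | j. 2 \<le> j \<and> j \<le> a}) = lie_gen Q I generators"
    by (simp add: generators_def)
  show ?thesis
    unfolding gen ideal_gen_empty lie_iso_HH1_def
  proof (intro exI[of _ kronecker_image] conjI ballI allI impI)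
    fix E assume "is_der (kronecker a) {pzero} E"
    then obtain D where "D \<in> lie_gen Q I generators" "der_eq (kronecker a) {pzero} (kronecker_image D) E"
      by (rule kronecker_image_surj)
    then show "\<exists>D\<in>lie_gen Q I generators. der_eq (kronecker a) {pzero} (kronecker_image D) E" by blast
  qed (simp_all add: is_der_kronecker_image der_eq_kronecker_image_iff kronecker_image_lin kronecker_image_dbr)
qed

end
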